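(* Let $X$, $A$, $B$, $C$, $Y$, $G_+$, $G_-$, $T_+$, $T_-$ be as in the context. Then: (i) $T:\mathbb{R}\to L(Y,Y)$, $T(t):=T_+(t)$ for $t\geqslant0$ and $T(t):=T_-(-t)$ for $t<0$, is a strongly continuous group. (ii) For every $t_0\in\mathbb{R}$ and every $\xi\in D(G_+)$ there is a uniquely determined differentiable map $u:\mathbb{R}\to Y$ with $u(t_0)=\xi$ and $u'(t)=-G_+u(t)$ for all $t\in\mathbb{R}$. (iii) For such $u$, the function $t\mapsto(u(t)|u(t))$ is differentiable with derivative $-2\,\mathrm{Re}\,(u(t)|G_+u(t))$ for all $t\in\mathbb{R}$.
   Context: $(X,\langle\cdot|\cdot\rangle)$ is a nontrivial complex Hilbert space with norm $\|\cdot\|$. $A:D(A)\to X$ is a densely defined self-adjoint linear operator with $\langle\xi|A\xi\rangle\geqslant\varepsilon\langle\xi|\xi\rangle$ for all $\xi\in D(A)$ for some $\varepsilon>0$; $A^{1/2}$ is its positive self-adjoint square root. $B:D(A^{1/2})\to X$ is linear with $\|B\xi\|^2\leqslant a^2\|A^{1/2}\xi\|^2+b^2\|\xi\|^2$ for all $\xi\in D(A^{1/2})$, for some $a\in[0,1)$, $b\in\mathbb{R}$, and $B$ is symmetric or bounded. $C:D(A^{1/2})\to X$ is linear with $\|C\xi\|^2\leqslant c^2\|A^{1/2}\xi\|^2+d^2\|\xi\|^2$ for all $\xi\in D(A^{1/2})$, for some real $c,d$. $Y:=D(A^{1/2})\times X$ with inner product $(\xi|\eta):=\langle A^{1/2}\xi_1|A^{1/2}\eta_1\rangle+\langle\xi_2|\eta_2\rangle$.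 $H:D(A)\times D(A^{1/2})\to Y$, $H\xi:=(-i\xi_2,iA\xi_1)$; $\hat B:D(H)\to Y$, $\hat B\xi:=(0,-B\xi_2)$; $V:Y\to Y$, $V\xi:=(0,iC\xi_1)$; $G_+:=-i(H+\hat B+V)$, $G_-:=i(H+\hat B+V)$ with domain $D(H)$. $G_\pm$ generate strongly continuous semigroups $T_\pm$ on $[0,\infty)$ in the sense $T_\pm(t)=e^{-tG_\pm}$, i.e. $\frac{d}{dt}T_\pm(t)\xi=-G_\pm T_\pm(t)\xi$ for $\xi\in D(H)$. *)

theory Defs
  imports "HOL-Analysis.Analysis"
begin

section \<open>Complex vector spaces as real vector spaces with a complex structure J (= multiplication by i)\<close>

definition complex_structure :: "('a::real_vector \<Rightarrow> 'a) \<Rightarrow> bool" where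
  "complex_structure J \<longleftrightarrow> linear J \<and> (\<forall>x. J (J x) = - x)"

definition cscale :: "('a::real_vector \<Rightarrow> 'a) \<Rightarrow> complex \<Rightarrow> 'a \<Rightarrow> 'a" where
  "cscale J c x = Re c *\<^sub>R x + Im c *\<^sub>R J x"

definition cinner_space :: "('a::real_vector \<Rightarrow> 'a) \<Rightarrow> ('a \<Rightarrow> 'a \<Rightarrow> complex) \<Rightarrow> bool" where
  "cinner_space J ip \<longleftrightarrow> complex_structure J \<and>
     (\<forall>x y. ip x y = cnj (ip y x)) \<and>
     (\<forall>x y z. ip x (y + z) = ip x y + ip x z) \<and>
     (\<forall>c x y. ip x (cscale J c y) = c * ip x y) \<and>
     (\<forall>x. 0 \<le> Re (ip x x)) \<and>
     (\<forall>x. ip x x = 0 \<longrightarrow> x = 0)"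

definition cnorm :: "('a \<Rightarrow> 'a \<Rightarrow> complex) \<Rightarrow> 'a \<Rightarrow> real" where
  "cnorm ip x = sqrt (Re (ip x x))"

definition hilbert_space :: "('a::real_vector \<Rightarrow> 'a) \<Rightarrow> ('a \<Rightarrow> 'a \<Rightarrow> complex) \<Rightarrow> bool" where
  "hilbert_space J ip \<longleftrightarrow> cinner_space J ip \<and>
     (\<forall>f :: nat \<Rightarrow> 'a.
        (\<forall>e>0. \<exists>N. \<forall>m\<ge>N. \<forall>n\<ge>N. cnorm ip (f m - f n) < e) \<longrightarrow>
        (\<exists>l. (\<lambda>n. cnorm ip (f n - l)) \<longlonglongrightarrow> 0))"

definition csubspace_on :: "('a::real_vector \<Rightarrow> 'a) \<Rightarrow> 'a set \<Rightarrow> bool" where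
  "csubspace_on J D \<longleftrightarrow> 0 \<in> D \<and> (\<forall>x\<in>D. \<forall>y\<in>D. x + y \<in> D) \<and> (\<forall>c. \<forall>x\<in>D. cscale J c x \<in> D)"

definition lin_on :: "('a::real_vector \<Rightarrow> 'a) \<Rightarrow> 'a set \<Rightarrow> ('a \<Rightarrow> 'a) \<Rightarrow> bool" where
  "lin_on J D f \<longleftrightarrow> csubspace_on J D \<and>
     (\<forall>x\<in>D. \<forall>y\<in>D. f (x + y) = f x + f y) \<and>
     (\<forall>c. \<forall>x\<in>D. f (cscale J c x) = cscale J c (f x))"

definition dense_in :: "('a::real_vector \<Rightarrow> 'a \<Rightarrow> complex) \<Rightarrow> 'a set \<Rightarrow> bool" where
  "dense_in ip D \<longleftrightarrow> (\<forall>x. \<forall>e>0. \<exists>y\<in>D. cnorm ip (x - y) < e)"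

definition symmetric_op :: "('a \<Rightarrow> 'a \<Rightarrow> complex) \<Rightarrow> 'a set \<Rightarrow> ('a \<Rightarrow> 'a) \<Rightarrow> bool" where
  "symmetric_op ip D f \<longleftrightarrow> (\<forall>x\<in>D. \<forall>y\<in>D. ip (f x) y = ip x (f y))"

text \<open>Densely defined, symmetric, and the adjoint has the same domain (hence A* = A).\<close>
definition self_adjoint :: "('a::real_vector \<Rightarrow> 'a) \<Rightarrow> ('a \<Rightarrow> 'a \<Rightarrow> complex) \<Rightarrow> 'a set \<Rightarrow> ('a \<Rightarrow> 'a) \<Rightarrow> bool" where
  "self_adjoint J ip D f \<longleftrightarrow> lin_on J D f \<and> dense_in ip D \<and> symmetric_op ip D f \<and>
     (\<forall>y z. (\<forall>x\<in>D. ip (f x) y = ip x z) \<longrightarrow> y \<in> D)"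

definition is_pos_sqrt :: "('a::real_vector \<Rightarrow> 'a) \<Rightarrow> ('a \<Rightarrow> 'a \<Rightarrow> complex) \<Rightarrow> 'a set \<Rightarrow> ('a \<Rightarrow> 'a)
    \<Rightarrow> 'a set \<Rightarrow> ('a \<Rightarrow> 'a) \<Rightarrow> bool" where
  "is_pos_sqrt J ip DA A DS S \<longleftrightarrow> self_adjoint J ip DS S \<and> (\<forall>x\<in>DS. 0 \<le> Re (ip x (S x))) \<and>
     DA = {x \<in> DS. S x \<in> DS} \<and> (\<forall>x\<in>DA. S (S x) = A x)"

section \<open>The space Y = D(A^(1/2)) x X\<close>

definition Yset :: "'a set \<Rightarrow> ('a \<times> 'a) set" where
  "Yset DS = DS \<times> UNIV"

definition ipY :: "('a \<Rightarrow> 'a \<Rightarrow> complex) \<Rightarrow> ('a \<Rightarrow> 'a) \<Rightarrow> 'a \<times> 'a \<Rightarrow> 'a \<times> 'a \<Rightarrow> complex" where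
  "ipY ip S \<xi> \<eta> = ip (S (fst \<xi>)) (S (fst \<eta>)) + ip (snd \<xi>) (snd \<eta>)"

definition nY :: "('a \<Rightarrow> 'a \<Rightarrow> complex) \<Rightarrow> ('a \<Rightarrow> 'a) \<Rightarrow> 'a \<times> 'a \<Rightarrow> real" where
  "nY ip S \<xi> = sqrt (Re (ipY ip S \<xi> \<xi>))"

definition pscale :: "('a::real_vector \<Rightarrow> 'a) \<Rightarrow> complex \<Rightarrow> 'a \<times> 'a \<Rightarrow> 'a \<times> 'a" where
  "pscale J c \<xi> = (cscale J c (fst \<xi>), cscale J c (snd \<xi>))"

definition Hop :: "('a::real_vector \<Rightarrow> 'a) \<Rightarrow> ('a \<Rightarrow> 'a) \<Rightarrow> 'a \<times> 'a \<Rightarrow> 'a \<times> 'a" where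
  "Hop J A \<xi> = (cscale J (- \<i>) (snd \<xi>), cscale J \<i> (A (fst \<xi>)))"

definition Bhat :: "('a::real_vector \<Rightarrow> 'a) \<Rightarrow> 'a \<times> 'a \<Rightarrow> 'a \<times> 'a" where
  "Bhat B \<xi> = (0, - B (snd \<xi>))"

definition Vop :: "('a::real_vector \<Rightarrow> 'a) \<Rightarrow> ('a \<Rightarrow> 'a) \<Rightarrow> 'a \<times> 'a \<Rightarrow> 'a \<times> 'a" where
  "Vop J C \<xi> = (0, cscale J \<i> (C (fst \<xi>)))"

definition Gplus :: "('a::real_vector \<Rightarrow> 'a) \<Rightarrow> ('a \<Rightarrow> 'a) \<Rightarrow> ('a \<Rightarrow> 'a) \<Rightarrow> ('a \<Rightarrow> 'a) \<Rightarrow> 'a \<times> 'a \<Rightarrow> 'a \<times> 'a" where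
  "Gplus J A B C \<xi> = pscale J (- \<i>) (Hop J A \<xi> + Bhat B \<xi> + Vop J C \<xi>)"

definition Gminus :: "('a::real_vector \<Rightarrow> 'a) \<Rightarrow> ('a \<Rightarrow> 'a) \<Rightarrow> ('a \<Rightarrow> 'a) \<Rightarrow> ('a \<Rightarrow> 'a) \<Rightarrow> 'a \<times> 'a \<Rightarrow> 'a \<times> 'a" where
  "Gminus J A B C \<xi> = pscale J \<i> (Hop J A \<xi> + Bhat B \<xi> + Vop J C \<xi>)"

definition DH :: "'a set \<Rightarrow> 'a set \<Rightarrow> ('a \<times> 'a) set" where
  "DH DA DS = DA \<times> DS"

definition bounded_lin_Y :: "('a::real_vector \<Rightarrow> 'a) \<Rightarrow> ('a \<Rightarrow> 'a \<Rightarrow> complex) \<Rightarrow> ('a \<Rightarrow> 'a) \<Rightarrow> 'a set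
    \<Rightarrow> ('a \<times> 'a \<Rightarrow> 'a \<times> 'a) \<Rightarrow> bool" where
  "bounded_lin_Y J ip S DS T \<longleftrightarrow>
     (\<forall>\<xi>\<in>Yset DS. T \<xi> \<in> Yset DS) \<and>
     (\<forall>\<xi>\<in>Yset DS. \<forall>\<eta>\<in>Yset DS. T (\<xi> + \<eta>) = T \<xi> + T \<eta>) \<and>
     (\<forall>c. \<forall>\<xi>\<in>Yset DS. T (pscale J c \<xi>) = pscale J c (T \<xi>)) \<and>
     (\<exists>K. \<forall>\<xi>\<in>Yset DS. nY ip S (T \<xi>) \<le> K * nY ip S \<xi>)"

definition sc_semigroup :: "('a::real_vector \<Rightarrow> 'a) \<Rightarrow> ('a \<Rightarrow> 'a \<Rightarrow> complex) \<Rightarrow> ('a \<Rightarrow> 'a) \<Rightarrow> 'a set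
    \<Rightarrow> (real \<Rightarrow> 'a \<times> 'a \<Rightarrow> 'a \<times> 'a) \<Rightarrow> bool" where
  "sc_semigroup J ip S DS T \<longleftrightarrow>
     (\<forall>t\<ge>0. bounded_lin_Y J ip S DS (T t)) \<and>
     (\<forall>\<xi>\<in>Yset DS. T 0 \<xi> = \<xi>) \<and>
     (\<forall>s\<ge>0. \<forall>t\<ge>0. \<forall>\<xi>\<in>Yset DS. T (s + t) \<xi> = T s (T t \<xi>)) \<and>
     (\<forall>\<xi>\<in>Yset DS. \<forall>t\<ge>0. ((\<lambda>s. nY ip S (T s \<xi> - T t \<xi>)) \<longlongrightarrow> 0) (at t within {0..}))"

definition neg_generator :: "('a::real_vector \<Rightarrow> 'a \<Rightarrow> complex) \<Rightarrow> ('a \<Rightarrow> 'a) \<Rightarrow> 'a set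
    \<Rightarrow> (real \<Rightarrow> 'a \<times> 'a \<Rightarrow> 'a \<times> 'a) \<Rightarrow> ('a \<times> 'a) set \<Rightarrow> ('a \<times> 'a \<Rightarrow> 'a \<times> 'a) \<Rightarrow> bool" where
  "neg_generator ip S DS T D G \<longleftrightarrow> D \<subseteq> Yset DS \<and>
     (\<forall>\<xi>\<in>Yset DS.
        ((\<exists>\<eta>\<in>Yset DS. ((\<lambda>h. nY ip S ((1 / h) *\<^sub>R (T h \<xi> - \<xi>) - \<eta>))
            \<longlongrightarrow> 0) (at_right 0)) \<longleftrightarrow> \<xi> \<in> D) \<and>
        (\<xi> \<in> D \<longrightarrow> ((\<lambda>h. nY ip S ((1 / h) *\<^sub>R (T h \<xi> - \<xi>) - (- G \<xi>)))
            \<longlongrightarrow> 0) (at_right 0)))"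

definition sc_group :: "('a::real_vector \<Rightarrow> 'a) \<Rightarrow> ('a \<Rightarrow> 'a \<Rightarrow> complex) \<Rightarrow> ('a \<Rightarrow> 'a) \<Rightarrow> 'a set
    \<Rightarrow> (real \<Rightarrow> 'a \<times> 'a \<Rightarrow> 'a \<times> 'a) \<Rightarrow> bool" where
  "sc_group J ip S DS T \<longleftrightarrow>
     (\<forall>t. bounded_lin_Y J ip S DS (T t)) \<and>
     (\<forall>\<xi>\<in>Yset DS. T 0 \<xi> = \<xi>) \<and>
     (\<forall>s t. \<forall>\<xi>\<in>Yset DS. T (s + t) \<xi> = T s (T t \<xi>)) \<and>
     (\<forall>\<xi>\<in>Yset DS. \<forall>t. ((\<lambda>s. nY ip S (T s \<xi> - T t \<xi>)) \<longlongrightarrow> 0) (at t))"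

definition has_Y_derivative :: "('a::real_vector \<Rightarrow> 'a \<Rightarrow> complex) \<Rightarrow> ('a \<Rightarrow> 'a)
    \<Rightarrow> (real \<Rightarrow> 'a \<times> 'a) \<Rightarrow> 'a \<times> 'a \<Rightarrow> real \<Rightarrow> bool" where
  "has_Y_derivative ip S u v t \<longleftrightarrow>
     ((\<lambda>h. nY ip S ((1 / h) *\<^sub>R (u (t + h) - u t) - v)) \<longlongrightarrow> 0) (at 0)"

end

theory Submission
  imports Defs
begin

(* Both G and -G satisfy the energy bound |Re (xi | G xi)| <= omega * |xi|^2 on D(H): in
   (xi | H xi) the terms coming from S cancel, so only B and C contribute.  Gronwall's inequality
   for |w|^2 then shows that a solution of w' = G w or w' = -G w starting at 0 stays at 0.  This
   gives uniqueness of solutions, and applied to w(s) = T_+(t - s) x - T_-(s) T_+(t) x it shows that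
   T_-(t) T_+(t) is the identity on the domain, hence everywhere, as D(H) is dense in Y.  So
   T_+ and T_- glue to a group, whose orbits are the solutions; the energy identity is the product
   rule for (u | u).  Density of D(H) comes from surjectivity of A, proved with the projection
   theorem. *)
lemma DERIV_right_nonpos_imp_le_eps:
  fixes f :: "real \<Rightarrow> real"
  assumes ab: "a \<le> b" and cont: "continuous_on {a..b} f"
    and der: "\<And>t. a \<le> t \<Longrightarrow> t < b \<Longrightarrow> \<exists>d. (f has_real_derivative d) (at_right t) \<and> d \<le> 0"
    and e: "e > 0"
  shows "f b \<le> f a + e * (b - a)"
proof -
  define g where "g t = f t - f a - e * (t - a)" for t
  have gc: "continuous_on {a..b} g" unfolding g_def by (intro continuous_intros cont)
  define Z where "Z = {a..b} \<inter> g -` {..0}"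
  have Zc: "closed Z" unfolding Z_def by (rule continuous_closed_preimage[OF gc]) auto
  have aZ: "a \<in> Z" unfolding Z_def g_def using ab by auto
  have Zb: "bdd_above Z" unfolding Z_def by (auto intro: bdd_aboveI[of _ b])
  define c where "c = Sup Z"
  have "c \<in> Z" unfolding c_def using closed_contains_Sup[OF _ Zb Zc] aZ by auto
  hence cab: "a \<le> c" "c \<le> b" and gc0: "g c \<le> 0" unfolding Z_def by auto
  have "c = b"
  proof (rule ccontr)
    assume "c \<noteq> b"
    hence cb: "c < b" using cab by simp
    obtain d where d: "(f has_real_derivative d) (at_right c)" "d \<le> 0" using der[OF cab(1) cb] by blast
    have "(g has_real_derivative d - e) (at_right c)"
      unfolding g_def by (rule derivative_eq_intros d(1) refl)+ simp
    hence lim: "((\<lambda>y. (g y - g c) / (y - c)) \<longlongrightarrow> d - e) (at_right c)"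
      using has_field_derivative_iff by blast
    have "eventually (\<lambda>y. (g y - g c) / (y - c) < 0 \<and> y \<in> {c<..<b}) (at_right c)"
      using order_tendstoD(2)[OF lim] d(2) e eventually_at_right_real[OF cb]
      by (auto intro: eventually_conj)
    then obtain y where y: "(g y - g c) / (y - c) < 0" "y \<in> {c<..<b}"
      using eventually_happens'[OF trivial_limit_at_right_real] by blast
    hence "y \<in> Z" unfolding Z_def using gc0 cab by (auto simp: divide_less_0_iff)
    hence "y \<le> c" unfolding c_def using Zb by (simp add: cSup_upper)
    thus False using y(2) by simp
  qed
  thus ?thesis using gc0 unfolding g_def by simp
qed

lemma DERIV_right_nonpos_imp_le:
  fixes f :: "real \<Rightarrow> real"
  assumes ab: "a \<le> b" and cont: "continuous_on {a..b} f"
    and der: "\<And>t. a \<le> t \<Longrightarrow> t < b \<Longrightarrow> \<exists>d. (f has_real_derivative d) (at_right t) \<and> d \<le> 0"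
  shows "f b \<le> f a"
proof (rule field_le_epsilon)
  fix e :: real assume "e > 0"
  show "f b \<le> f a + e"
  proof (cases "a = b")
    case False
    hence "e / (b - a) > 0" using ab \<open>e > 0\<close> by simp
    from DERIV_right_nonpos_imp_le_eps[OF ab cont der this] show ?thesis using False by simp
  qed (use \<open>e > 0\<close> in simp)
qed

lemma gronwall_right_derivative:
  fixes f :: "real \<Rightarrow> real"
  assumes T0: "0 \<le> T0" and cont: "continuous_on {0..T0} f"
    and der: "\<And>t. 0 \<le> t \<Longrightarrow> t < T0 \<Longrightarrow> \<exists>d. (f has_real_derivative d) (at_right t) \<and> d \<le> L * f t"
  shows "f T0 \<le> exp (L * T0) * f 0"
proof -
  define g where "g t = exp (- L * t) * f t" for t
  have gc: "continuous_on {0..T0} g" unfolding g_def by (intro continuous_intros cont)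
  have "g T0 \<le> g 0"
  proof (rule DERIV_right_nonpos_imp_le[OF T0 gc])
    fix t assume t: "0 \<le> t" "t < T0"
    obtain d where d: "(f has_real_derivative d) (at_right t)" "d \<le> L * f t" using der[OF t] by blast
    have "(g has_real_derivative exp (- L * t) * (d - L * f t)) (at_right t)" unfolding g_def
      by (rule derivative_eq_intros d(1) refl)+ (simp add: algebra_simps)
    moreover have "exp (- L * t) * (d - L * f t) \<le> 0" using d(2) by (simp add: mult_nonneg_nonpos)
    ultimately show "\<exists>d. (g has_real_derivative d) (at_right t) \<and> d \<le> 0" by blast
  qed
  hence "exp (L * T0) * (exp (- L * T0) * f T0) \<le> exp (L * T0) * f 0" unfolding g_def by simp
  thus ?thesis by (simp add: exp_minus field_simps)
qed

locale semi_inner_space =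
  fixes V :: "'b::real_vector set" and P :: "'b \<Rightarrow> 'b \<Rightarrow> complex" and J :: "'b \<Rightarrow> 'b"
  assumes zero_in: "0 \<in> V"
    and add_in: "x \<in> V \<Longrightarrow> y \<in> V \<Longrightarrow> x + y \<in> V"
    and scaleR_in: "x \<in> V \<Longrightarrow> r *\<^sub>R x \<in> V"
    and J_in: "x \<in> V \<Longrightarrow> J x \<in> V"
    and ip_commute: "x \<in> V \<Longrightarrow> y \<in> V \<Longrightarrow> P x y = cnj (P y x)"
    and ip_add_right: "x \<in> V \<Longrightarrow> y \<in> V \<Longrightarrow> z \<in> V \<Longrightarrow> P x (y + z) = P x y + P x z"
    and ip_scaleR_right: "x \<in> V \<Longrightarrow> y \<in> V \<Longrightarrow> P x (r *\<^sub>R y) = of_real r * P x y"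
    and ip_J_right: "x \<in> V \<Longrightarrow> y \<in> V \<Longrightarrow> P x (J y) = \<i> * P x y"
    and Re_ip_self_nonneg: "x \<in> V \<Longrightarrow> 0 \<le> Re (P x x)"
begin

definition nrm :: "'b \<Rightarrow> real" where "nrm x = sqrt (Re (P x x))"

lemma uminus_in: "x \<in> V \<Longrightarrow> - x \<in> V"
  using scaleR_in[of x "-1"] by simp

lemma diff_in: "x \<in> V \<Longrightarrow> y \<in> V \<Longrightarrow> x - y \<in> V"
  using add_in[of x "-y"] uminus_in[of y] by simp

lemma ip_add_left: "x \<in> V \<Longrightarrow> y \<in> V \<Longrightarrow> z \<in> V \<Longrightarrow> P (x + y) z = P x z + P y z"
  using ip_commute[of "x+y" z] ip_commute[of z x] ip_commute[of z y] ip_add_right[of z x y] add_in[of x y]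
  by simp

lemma ip_scaleR_left: "x \<in> V \<Longrightarrow> y \<in> V \<Longrightarrow> P (r *\<^sub>R x) y = of_real r * P x y"
  using ip_commute[of "r *\<^sub>R x" y] ip_commute[of y x] ip_scaleR_right[of y x r] scaleR_in[of x r] by simp

lemma ip_zero_right: "x \<in> V \<Longrightarrow> P x 0 = 0"
  using ip_scaleR_right[of x 0 0] zero_in by simp

lemma ip_zero_left: "x \<in> V \<Longrightarrow> P 0 x = 0"
  using ip_scaleR_left[of 0 x 0] zero_in by simp

lemma ip_minus_right: "x \<in> V \<Longrightarrow> y \<in> V \<Longrightarrow> P x (- y) = - P x y"
  using ip_scaleR_right[of x y "-1"] by simp

lemma ip_minus_left: "x \<in> V \<Longrightarrow> y \<in> V \<Longrightarrow> P (- x) y = - P x y"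
  using ip_scaleR_left[of x y "-1"] by simp

lemma ip_diff_right: "x \<in> V \<Longrightarrow> y \<in> V \<Longrightarrow> z \<in> V \<Longrightarrow> P x (y - z) = P x y - P x z"
  using ip_add_right[of x y "-z"] ip_minus_right[of x z] uminus_in[of z] by simp

lemma ip_diff_left: "x \<in> V \<Longrightarrow> y \<in> V \<Longrightarrow> z \<in> V \<Longrightarrow> P (x - y) z = P x z - P y z"
  using ip_add_left[of x "-y" z] ip_minus_left[of y z] uminus_in[of y] by simp

lemma Im_ip_self: "x \<in> V \<Longrightarrow> Im (P x x) = 0"
  using arg_cong[OF ip_commute[of x x], of Im] by simp

lemma Re_ip_commute: "x \<in> V \<Longrightarrow> y \<in> V \<Longrightarrow> Re (P y x) = Re (P x y)"
  using ip_commute[of x y] by simp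

lemma nrm_nonneg: "x \<in> V \<Longrightarrow> nrm x \<ge> 0"
  unfolding nrm_def using Re_ip_self_nonneg by simp

lemma nrm_square: "x \<in> V \<Longrightarrow> nrm x ^ 2 = Re (P x x)"
  unfolding nrm_def using Re_ip_self_nonneg[of x] by simp

lemma ip_self_eq: "x \<in> V \<Longrightarrow> P x x = of_real (nrm x ^ 2)"
  using nrm_square[of x] Im_ip_self[of x] by (simp add: complex_eq_iff)

lemma nrm_zero [simp]: "nrm 0 = 0"
  unfolding nrm_def using ip_zero_left zero_in by simp

lemma ip_self_add_scaleR:
  assumes "x \<in> V" "z \<in> V"
  shows "P (x + t *\<^sub>R z) (x + t *\<^sub>R z) = P x x + of_real t * (P x z + P z x) + of_real t ^ 2 * P z z"
proof -
  have tz: "t *\<^sub>R z \<in> V" using assms scaleR_in by auto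
  have "P (x + t *\<^sub>R z) (x + t *\<^sub>R z) = P x x + P x (t *\<^sub>R z) + (P (t *\<^sub>R z) x + P (t *\<^sub>R z) (t *\<^sub>R z))"
    using ip_add_left[OF assms(1) tz] ip_add_right assms tz add_in by (simp add: add.assoc)
  also have "\<dots> = P x x + of_real t * P x z + (of_real t * P z x + of_real t * (of_real t * P z z))"
    using ip_scaleR_left ip_scaleR_right assms tz by simp
  finally show ?thesis by (simp add: power2_eq_square algebra_simps)
qed

lemma nrm_add_scaleR_square:
  assumes "x \<in> V" "y \<in> V"
  shows "nrm (x + t *\<^sub>R y) ^ 2 = nrm x ^ 2 + 2 * t * Re (P x y) + t ^ 2 * nrm y ^ 2"
  using arg_cong[OF ip_self_add_scaleR[OF assms, of t], of Re] Re_ip_commute[OF assms]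
    nrm_square assms add_in scaleR_in
  by (simp add: power2_eq_square)

lemma Re_ip_le_nrm_mult:
  assumes "x \<in> V" "y \<in> V"
  shows "Re (P x y) \<le> nrm x * nrm y"
proof -
  define a b c where "a = nrm x ^ 2" and "b = Re (P x y)" and "c = nrm y ^ 2"
  have q: "0 \<le> a + 2 * t * b + t^2 * c" for t
    using nrm_add_scaleR_square[OF assms, of t] unfolding a_def b_def c_def
    by (metis zero_le_power2)
  have "b^2 \<le> a * c"
  proof (cases "c = 0")
    case True
    have "b = 0"
    proof (rule ccontr)
      assume "b \<noteq> 0"
      have "0 \<le> a + 2 * (- (a + 1) / (2 * b)) * b" using q[of "- (a + 1) / (2 * b)"] True by simp
      also have "\<dots> = -1" using \<open>b \<noteq> 0\<close> by (simp add: field_simps)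
      finally show False by simp
    qed
    then show ?thesis using True by simp
  next
    case False
    hence cp: "c > 0" unfolding c_def by simp
    have "0 \<le> a + 2 * (- b / c) * b + (- b / c)^2 * c" using q[of "-b/c"] .
    also have "\<dots> = a - b^2 / c" using cp by (simp add: field_simps power2_eq_square)
    finally show ?thesis using cp by (simp add: field_simps)
  qed
  hence "\<bar>b\<bar> \<le> sqrt (a * c)" by (metis real_sqrt_abs real_sqrt_le_iff)
  thus ?thesis unfolding a_def b_def c_def using assms by (simp add: real_sqrt_mult nrm_nonneg)
qed

lemma nrm_minus: "x \<in> V \<Longrightarrow> nrm (- x) = nrm x"
  unfolding nrm_def using ip_minus_left ip_minus_right uminus_in by simp

lemma abs_Re_ip_le: "x \<in> V \<Longrightarrow> y \<in> V \<Longrightarrow> \<bar>Re (P x y)\<bar> \<le> nrm x * nrm y"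
  using Re_ip_le_nrm_mult[of x y] Re_ip_le_nrm_mult[of "-x" y] ip_minus_left nrm_minus uminus_in
  by force

lemma nrm_J: "y \<in> V \<Longrightarrow> nrm (J y) = nrm y"
proof -
  assume y: "y \<in> V"
  have "P (J y) (J y) = \<i> * P (J y) y" using ip_J_right J_in y by simp
  also have "P (J y) y = cnj (\<i> * P y y)" using ip_commute[of "J y" y] ip_J_right[of y y] J_in y by simp
  finally have "P (J y) (J y) = cnj (P y y)" by simp
  thus ?thesis unfolding nrm_def by simp
qed

lemma norm_ip_le: "x \<in> V \<Longrightarrow> y \<in> V \<Longrightarrow> cmod (P x y) \<le> 2 * nrm x * nrm y"
proof -
  assume xy: "x \<in> V" "y \<in> V"
  have "Im (P x y) = - Re (P x (J y))" using ip_J_right xy by simp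
  hence "\<bar>Im (P x y)\<bar> \<le> nrm x * nrm y" using abs_Re_ip_le[of x "J y"] nrm_J xy J_in by simp
  thus ?thesis using cmod_le[of "P x y"] abs_Re_ip_le[OF xy] by simp
qed

lemma nrm_triangle: "x \<in> V \<Longrightarrow> y \<in> V \<Longrightarrow> nrm (x + y) \<le> nrm x + nrm y"
proof -
  assume xy: "x \<in> V" "y \<in> V"
  have "nrm (x + y) ^ 2 = nrm x ^ 2 + 2 * Re (P x y) + nrm y ^ 2"
    using nrm_add_scaleR_square[OF xy, of 1] by simp
  also have "\<dots> \<le> (nrm x + nrm y)^2"
    using Re_ip_le_nrm_mult[OF xy] by (simp add: power2_eq_square algebra_simps)
  finally show ?thesis using nrm_nonneg xy by (meson add_nonneg_nonneg power2_le_imp_le)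
qed

lemma nrm_scaleR: "x \<in> V \<Longrightarrow> nrm (r *\<^sub>R x) = \<bar>r\<bar> * nrm x"
proof -
  assume x: "x \<in> V"
  have "P (r *\<^sub>R x) (r *\<^sub>R x) = of_real (r^2) * P x x"
    using ip_scaleR_left ip_scaleR_right x scaleR_in by (simp add: power2_eq_square)
  thus ?thesis unfolding nrm_def by (simp add: real_sqrt_mult)
qed

lemma nrm_minus_commute: "x \<in> V \<Longrightarrow> y \<in> V \<Longrightarrow> nrm (x - y) = nrm (y - x)"
  using nrm_minus[of "y - x"] diff_in by simp

lemma nrm_triangle_diff: "x \<in> V \<Longrightarrow> y \<in> V \<Longrightarrow> z \<in> V \<Longrightarrow> nrm (x - z) \<le> nrm (x - y) + nrm (y - z)"
  using nrm_triangle[of "x - y" "y - z"] diff_in by simp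

lemma nrm_reverse_triangle: "x \<in> V \<Longrightarrow> y \<in> V \<Longrightarrow> \<bar>nrm x - nrm y\<bar> \<le> nrm (x - y)"
  using nrm_triangle[of "x - y" y] nrm_triangle[of "y - x" x] diff_in nrm_minus_commute[of x y] by auto

lemma nrm_parallelogram:
  assumes "x \<in> V" "y \<in> V"
  shows "nrm (x - y)^2 + nrm (x + y)^2 = 2 * nrm x^2 + 2 * nrm y^2"
  using nrm_add_scaleR_square[OF assms, of 1] nrm_add_scaleR_square[OF assms, of "-1"] by simp


definition nlim :: "'c filter \<Rightarrow> ('c \<Rightarrow> 'b) \<Rightarrow> 'b \<Rightarrow> bool" where
  "nlim F f l \<longleftrightarrow> ((\<lambda>x. nrm (f x - l)) \<longlongrightarrow> 0) F"

lemma nlim_add: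
  assumes "nlim F f l" "nlim F g m" "eventually (\<lambda>x. f x \<in> V \<and> g x \<in> V) F" "l \<in> V" "m \<in> V"
  shows "nlim F (\<lambda>x. f x + g x) (l + m)"
  unfolding nlim_def
proof (rule tendsto_sandwich[where f="\<lambda>_. 0" and h="\<lambda>x. nrm (f x - l) + nrm (g x - m)"])
  show "\<forall>\<^sub>F n in F. 0 \<le> nrm (f n + g n - (l + m))"
    using assms(3) by eventually_elim (metis nrm_nonneg add_in diff_in assms(4,5))
  show "\<forall>\<^sub>F n in F. nrm (f n + g n - (l + m)) \<le> nrm (f n - l) + nrm (g n - m)"
    using assms(3) by eventually_elim
      (use nrm_triangle[of "f _ - l" "g _ - m"] diff_in assms(4,5) in \<open>auto simp: algebra_simps\<close>)
  show "((\<lambda>x. nrm (f x - l) + nrm (g x - m)) \<longlongrightarrow> 0) F"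
    using tendsto_add[OF assms(1,2)[unfolded nlim_def]] by simp
qed simp

lemma nlim_scaleR:
  assumes "nlim F f l" "eventually (\<lambda>x. f x \<in> V) F" "l \<in> V"
  shows "nlim F (\<lambda>x. r *\<^sub>R f x) (r *\<^sub>R l)"
proof -
  have "\<forall>\<^sub>F x in F. nrm (r *\<^sub>R f x - r *\<^sub>R l) = \<bar>r\<bar> * nrm (f x - l)"
    using assms(2) by eventually_elim (metis nrm_scaleR diff_in assms(3) scaleR_diff_right)
  moreover have "((\<lambda>x. \<bar>r\<bar> * nrm (f x - l)) \<longlongrightarrow> 0) F"
    using tendsto_mult_right_zero assms(1) unfolding nlim_def by blast
  ultimately show ?thesis unfolding nlim_def using tendsto_cong by fastforce
qed

lemma nlim_minus:
  assumes "nlim F f l" "eventually (\<lambda>x. f x \<in> V) F" "l \<in> V"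
  shows "nlim F (\<lambda>x. - f x) (- l)"
  using nlim_scaleR[OF assms, of "-1"] by simp

lemma nlim_diff:
  assumes "nlim F f l" "nlim F g m" "eventually (\<lambda>x. f x \<in> V \<and> g x \<in> V) F" "l \<in> V" "m \<in> V"
  shows "nlim F (\<lambda>x. f x - g x) (l - m)"
proof -
  have "nlim F (\<lambda>x. - g x) (- m)"
    using nlim_minus[OF assms(2) _ assms(5)] assms(3) by (simp add: eventually_conj_iff)
  moreover have "eventually (\<lambda>x. f x \<in> V \<and> - g x \<in> V) F"
    using assms(3) by eventually_elim (auto intro: uminus_in)
  ultimately show ?thesis using nlim_add[OF assms(1)] assms(4,5) uminus_in by fastforce
qed

lemma nlim_cong:
  assumes "nlim F f l" "eventually (\<lambda>x. f x = g x) F"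
  shows "nlim F g l"
proof -
  have "\<forall>\<^sub>F x in F. nrm (f x - l) = nrm (g x - l)" using assms(2) by (rule eventually_mono) simp
  thus ?thesis using assms(1) tendsto_cong unfolding nlim_def by fastforce
qed

lemma nlim_bounded_operator:
  assumes "nlim F f l" "eventually (\<lambda>x. f x \<in> V) F" "l \<in> V"
    and "\<And>x y. x \<in> V \<Longrightarrow> y \<in> V \<Longrightarrow> L (x - y) = L x - L y"
    and "\<And>x. x \<in> V \<Longrightarrow> nrm (L x) \<le> K * nrm x"
    and "\<And>x. x \<in> V \<Longrightarrow> L x \<in> V"
  shows "nlim F (\<lambda>x. L (f x)) (L l)"
  unfolding nlim_def
proof (rule tendsto_sandwich[where f="\<lambda>_. 0" and h="\<lambda>x. K * nrm (f x - l)"])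
  show "\<forall>\<^sub>F n in F. 0 \<le> nrm (L (f n) - L l)"
    using assms(2) by eventually_elim (metis nrm_nonneg diff_in assms(3,4,6))
  show "\<forall>\<^sub>F n in F. nrm (L (f n) - L l) \<le> K * nrm (f n - l)"
    using assms(2) by eventually_elim (metis assms(3,4,5) diff_in)
  show "((\<lambda>x. K * nrm (f x - l)) \<longlongrightarrow> 0) F"
    using tendsto_mult_right_zero assms(1) unfolding nlim_def by blast
qed simp

lemma nlim_unique_nrm:
  assumes "F \<noteq> bot" "nlim F f l" "nlim F f m" "eventually (\<lambda>x. f x \<in> V) F" "l \<in> V" "m \<in> V"
  shows "nrm (l - m) = 0"
proof -
  have "\<forall>\<^sub>F x in F. nrm (l - m) \<le> nrm (f x - l) + nrm (f x - m)"
    using assms(4) by eventually_elim (metis nrm_triangle_diff nrm_minus_commute assms(5,6))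
  moreover have "((\<lambda>x. nrm (f x - l) + nrm (f x - m)) \<longlongrightarrow> 0) F"
    using tendsto_add[OF assms(2,3)[unfolded nlim_def]] by simp
  ultimately have "nrm (l - m) \<le> 0"
    using tendsto_le[OF assms(1) _ tendsto_const] by blast
  thus ?thesis using nrm_nonneg[of "l - m"] diff_in assms(5,6) by simp
qed

lemma nlim_ip_right:
  assumes "nlim F q v" "eventually (\<lambda>h. q h \<in> V) F" "x \<in> V" "v \<in> V"
  shows "((\<lambda>h. P x (q h)) \<longlongrightarrow> P x v) F"
proof -
  have "((\<lambda>h. P x (q h) - P x v) \<longlongrightarrow> 0) F"
  proof (rule Lim_null_comparison)
    show "\<forall>\<^sub>F h in F. norm (P x (q h) - P x v) \<le> 2 * nrm x * nrm (q h - v)"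
      using assms(2) by eventually_elim (metis ip_diff_right norm_ip_le assms(3,4) diff_in)
    show "((\<lambda>h. 2 * nrm x * nrm (q h - v)) \<longlongrightarrow> 0) F"
      using tendsto_mult_right_zero assms(1) unfolding nlim_def by blast
  qed
  thus ?thesis using Lim_null by blast
qed

lemma nlim_ip_left:
  assumes "nlim F q v" "eventually (\<lambda>h. q h \<in> V) F" "x \<in> V" "v \<in> V"
  shows "((\<lambda>h. P (q h) x) \<longlongrightarrow> P v x) F"
proof -
  have "((\<lambda>h. cnj (P x (q h))) \<longlongrightarrow> cnj (P x v)) F"
    by (rule tendsto_cnj[OF nlim_ip_right[OF assms]])
  moreover have "\<forall>\<^sub>F h in F. cnj (P x (q h)) = P (q h) x"
    using assms(2) by eventually_elim (simp add: ip_commute[OF _ assms(3)])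
  ultimately show ?thesis using ip_commute[OF assms(4,3)] by (simp add: tendsto_cong)
qed

lemma nlim_scaled_ip_self:
  assumes "nlim F q v" "eventually (\<lambda>h. q h \<in> V) F" "v \<in> V" "((\<lambda>h. h) \<longlongrightarrow> 0) F"
  shows "((\<lambda>h. of_real h * P (q h) (q h)) \<longlongrightarrow> 0) F"
proof (rule Lim_null_comparison)
  show "\<forall>\<^sub>F h in F. norm (of_real h * P (q h) (q h)) \<le> \<bar>h\<bar> * (nrm (q h - v) + nrm v)^2"
    using assms(2)
  proof eventually_elim
    case (elim h)
    have "nrm (q h) \<le> nrm (q h - v) + nrm v" using nrm_triangle[of "q h - v" v] elim assms(3) diff_in by simp
    hence "nrm (q h) ^ 2 \<le> (nrm (q h - v) + nrm v)^2" using nrm_nonneg elim by (simp add: power_mono)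
    moreover have "norm (of_real h * P (q h) (q h)) = \<bar>h\<bar> * nrm (q h) ^ 2"
      using ip_self_eq[OF elim] nrm_nonneg[OF elim] by (simp add: norm_mult norm_power del: of_real_power)
    ultimately show ?case by (simp add: mult_left_mono)
  qed
  have "((\<lambda>h. \<bar>h\<bar> * (nrm (q h - v) + nrm v)^2) \<longlongrightarrow> \<bar>0\<bar> * (0 + nrm v)^2) F"
    using assms(1,4) unfolding nlim_def by (intro tendsto_intros)
  thus "((\<lambda>h. \<bar>h\<bar> * (nrm (q h - v) + nrm v)^2) \<longlongrightarrow> 0) F" by simp
qed

lemma ip_self_difference_quotient:
  assumes F: "eventually (\<lambda>h. h \<noteq> 0) F" "((\<lambda>h. h) \<longlongrightarrow> 0) F"
    and x: "x \<in> V" and v: "v \<in> V" and ev: "eventually (\<lambda>h. y h \<in> V) F"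
    and lim: "nlim F (\<lambda>h. (1/h) *\<^sub>R (y h - x)) v"
  shows "((\<lambda>h. (P (y h) (y h) - P x x) / of_real h) \<longlongrightarrow> P v x + P x v) F"
proof -
  define q where "q h = (1/h) *\<^sub>R (y h - x)" for h
  have qV: "eventually (\<lambda>h. q h \<in> V) F"
    using ev unfolding q_def by eventually_elim (intro scaleR_in diff_in x)
  have ql: "nlim F q v" using lim unfolding q_def .
  have "((\<lambda>h. P x (q h) + P (q h) x + of_real h * P (q h) (q h)) \<longlongrightarrow> P x v + P v x + 0) F"
    by (intro tendsto_add nlim_ip_right[OF ql qV x v] nlim_ip_left[OF ql qV x v]
        nlim_scaled_ip_self[OF ql qV v F(2)])
  moreover have "eventually (\<lambda>h. P x (q h) + P (q h) x + of_real h * P (q h) (q h)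
      = (P (y h) (y h) - P x x) / of_real h) F"
    using qV F(1) ev
  proof eventually_elim
    case (elim h)
    have "y h = x + h *\<^sub>R q h" unfolding q_def using elim by simp
    thus ?case using elim(2) ip_self_add_scaleR[OF x elim(1)] by (simp add: field_simps power2_eq_square)
  qed
  ultimately show ?thesis using tendsto_cong by (fastforce simp: add.commute)
qed


lemma continuous_on_nrm:
  assumes "\<And>s. s \<in> S \<Longrightarrow> w s \<in> V"
    and "\<And>s. s \<in> S \<Longrightarrow> ((\<lambda>r. nrm (w r - w s)) \<longlongrightarrow> 0) (at s within S)"
  shows "continuous_on S (\<lambda>s. nrm (w s))"
  unfolding continuous_on_def
proof (intro ballI)
  fix s assume s: "s \<in> S"
  have "((\<lambda>r. nrm (w r) - nrm (w s)) \<longlongrightarrow> 0) (at s within S)"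
  proof (rule Lim_null_comparison)
    have "\<forall>\<^sub>F r in at s within S. r \<in> S" by (simp add: eventually_at_filter)
    thus "\<forall>\<^sub>F r in at s within S. norm (nrm (w r) - nrm (w s)) \<le> nrm (w r - w s)"
      by eventually_elim (use nrm_reverse_triangle assms(1) s in auto)
  qed (rule assms(2)[OF s])
  thus "((\<lambda>s. nrm (w s)) \<longlongrightarrow> nrm (w s)) (at s within S)" using Lim_null by blast
qed

lemma Re_ip_self_has_right_derivative:
  assumes ws: "w s \<in> V" and v: "v \<in> V" and ev: "eventually (\<lambda>h. w (s + h) \<in> V) (at_right 0)"
    and d: "nlim (at_right 0) (\<lambda>h. (1/h) *\<^sub>R (w (s + h) - w s)) v"
  shows "((\<lambda>s. Re (P (w s) (w s))) has_real_derivative 2 * Re (P (w s) v)) (at_right s)"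
proof -
  have "((\<lambda>h. (P (w (s + h)) (w (s + h)) - P (w s) (w s)) / of_real h) \<longlongrightarrow> P v (w s) + P (w s) v) (at_right 0)"
    by (rule ip_self_difference_quotient[OF _ _ ws v ev d])
       (auto simp: eventually_at_filter intro!: tendsto_ident_at[THEN tendsto_within_subset])
  from tendsto_Re[OF this]
  have "((\<lambda>h. (Re (P (w (h + s)) (w (h + s))) - Re (P (w s) (w s))) / (h + s - s)) \<longlongrightarrow> 2 * Re (P (w s) v)) (at_right 0)"
    using Re_ip_commute[OF ws v] by (simp add: add.commute Re_divide_of_real)
  hence "((\<lambda>y. (Re (P (w y) (w y)) - Re (P (w s) (w s))) / (y - s)) \<longlongrightarrow> 2 * Re (P (w s) v)) (at_right s)"
    unfolding at_right_to_0[of s] filterlim_filtermap by simp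
  thus ?thesis unfolding has_field_derivative_iff .
qed

lemma ip_self_has_derivative:
  assumes uV: "\<And>s. u s \<in> V" and v: "v \<in> V"
    and d: "nlim (at 0) (\<lambda>h. (1/h) *\<^sub>R (u (t + h) - u t)) v"
  shows "((\<lambda>s. P (u s) (u s)) has_vector_derivative complex_of_real (2 * Re (P (u t) v))) (at t)"
proof -
  have "((\<lambda>h. (P (u (t + h)) (u (t + h)) - P (u t) (u t)) / of_real h) \<longlongrightarrow> P v (u t) + P (u t) v) (at 0)"
    by (rule ip_self_difference_quotient[OF _ _ uV v _ d])
       (auto simp: eventually_at_filter uV intro!: tendsto_ident_at)
  from tendsto_Re[OF this]
  have "((\<lambda>h. (Re (P (u (h + t)) (u (h + t))) - Re (P (u t) (u t))) / (h + t - t)) \<longlongrightarrow> 2 * Re (P (u t) v)) (at 0)"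
    using Re_ip_commute[OF uV v] by (simp add: add.commute Re_divide_of_real)
  hence "((\<lambda>s. Re (P (u s) (u s))) has_real_derivative 2 * Re (P (u t) v)) (at t)"
    unfolding has_field_derivative_iff filterlim_at_to_0[of _ _ t] by simp
  moreover have "((\<lambda>s. Im (P (u s) (u s))) has_real_derivative 0) (at t)"
    using Im_ip_self[OF uV] by simp
  ultimately show ?thesis unfolding has_vector_derivative_complex_iff by simp
qed

lemma nrm_growth_gronwall:
  assumes T0: "0 \<le> T0" and wV: "\<And>s. 0 \<le> s \<Longrightarrow> s \<le> T0 \<Longrightarrow> w s \<in> V"
    and cont: "\<And>s. 0 \<le> s \<Longrightarrow> s \<le> T0 \<Longrightarrow> ((\<lambda>r. nrm (w r - w s)) \<longlongrightarrow> 0) (at s within {0..T0})"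
    and der: "\<And>s. 0 \<le> s \<Longrightarrow> s < T0 \<Longrightarrow> v s \<in> V \<and> nlim (at_right 0) (\<lambda>h. (1/h) *\<^sub>R (w (s + h) - w s)) (v s)
                   \<and> Re (P (w s) (v s)) \<le> L * nrm (w s)^2"
  shows "nrm (w T0)^2 \<le> exp (2 * L * T0) * nrm (w 0)^2"
proof -
  define f where "f s = Re (P (w s) (w s))" for s
  have fN: "f s = nrm (w s)^2" if "0 \<le> s" "s \<le> T0" for s unfolding f_def using nrm_square wV that by simp
  have "continuous_on {0..T0} (\<lambda>s. nrm (w s)^2)"
    by (intro continuous_intros continuous_on_nrm) (use wV cont in auto)
  hence fc: "continuous_on {0..T0} f" using continuous_on_cong[of "{0..T0}" "{0..T0}" f] fN by auto
  have "f T0 \<le> exp ((2 * L) * T0) * f 0"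
  proof (rule gronwall_right_derivative[OF T0 fc])
    fix s assume s: "0 \<le> s" "s < T0"
    have "eventually (\<lambda>h. h \<in> {0<..<T0 - s}) (at_right (0::real))"
      using eventually_at_right_real[of 0 "T0 - s"] s by simp
    hence "eventually (\<lambda>h. w (s + h) \<in> V) (at_right 0)"
      by eventually_elim (use wV s in auto)
    hence "(f has_real_derivative 2 * Re (P (w s) (v s))) (at_right s)"
      unfolding f_def using Re_ip_self_has_right_derivative wV der s by simp
    moreover have "2 * Re (P (w s) (v s)) \<le> 2 * L * f s" using der[OF s] fN[of s] s by simp
    ultimately show "\<exists>d. (f has_real_derivative d) (at_right s) \<and> d \<le> 2 * L * f s" by blast
  qed
  thus ?thesis using fN[of T0] fN[of 0] T0 by simp
qed


lemma nlim_derivative_imp_continuous: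
  assumes uV: "\<And>s. u s \<in> V" and v: "v \<in> V"
    and d: "nlim (at 0) (\<lambda>h. (1/h) *\<^sub>R (u (t + h) - u t)) v"
  shows "((\<lambda>r. nrm (u r - u t)) \<longlongrightarrow> 0) (at t)"
proof -
  define q where "q h = (1/h) *\<^sub>R (u (t + h) - u t)" for h
  have ql: "((\<lambda>h. nrm (q h - v)) \<longlongrightarrow> 0) (at 0)" using d unfolding nlim_def q_def .
  have qV: "q h \<in> V" for h unfolding q_def using uV by (intro scaleR_in diff_in)
  have "((\<lambda>h. nrm (u (h + t) - u t)) \<longlongrightarrow> 0) (at 0)"
  proof (rule tendsto_sandwich[where f="\<lambda>_. 0" and h="\<lambda>h. \<bar>h\<bar> * (nrm (q h - v) + nrm v)"])
    show "\<forall>\<^sub>F h in at 0. 0 \<le> nrm (u (h + t) - u t)" using nrm_nonneg uV diff_in by auto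
    show "\<forall>\<^sub>F h in at 0. nrm (u (h + t) - u t) \<le> \<bar>h\<bar> * (nrm (q h - v) + nrm v)"
      unfolding eventually_at_filter
    proof (rule always_eventually, intro allI impI)
      fix h :: real assume h: "h \<noteq> 0"
      have "u (h + t) - u t = h *\<^sub>R q h" unfolding q_def using h by (simp add: add.commute)
      hence "nrm (u (h + t) - u t) = \<bar>h\<bar> * nrm (q h)" using nrm_scaleR qV by simp
      also have "nrm (q h) \<le> nrm (q h - v) + nrm v" using nrm_triangle[of "q h - v" v] qV v diff_in by simp
      hence "\<bar>h\<bar> * nrm (q h) \<le> \<bar>h\<bar> * (nrm (q h - v) + nrm v)" by (simp add: mult_left_mono)
      finally show "nrm (u (h + t) - u t) \<le> \<bar>h\<bar> * (nrm (q h - v) + nrm v)" .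
    qed
    have "((\<lambda>h. \<bar>h\<bar> * (nrm (q h - v) + nrm v)) \<longlongrightarrow> \<bar>0\<bar> * (0 + nrm v)) (at (0::real))"
      by (intro tendsto_intros ql)
    thus "((\<lambda>h. \<bar>h\<bar> * (nrm (q h - v) + nrm v)) \<longlongrightarrow> 0) (at 0)" by simp
  qed simp
  thus ?thesis unfolding filterlim_at_to_0[of _ _ t] .
qed

lemma nlim_derivative_reflect:
  assumes uV: "\<And>s. u s \<in> V" and v: "v \<in> V"
    and d: "nlim (at 0) (\<lambda>h. (1/h) *\<^sub>R (u (t + h) - u t)) v"
  shows "nlim (at 0) (\<lambda>h. (1/h) *\<^sub>R (u (t - h) - u t)) (- v)"
proof -
  have "nlim (at 0) (\<lambda>h. - ((1/h) *\<^sub>R (u (t + h) - u t))) (- v)"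
    by (rule nlim_minus[OF d]) (use uV v in \<open>auto intro!: always_eventually scaleR_in diff_in\<close>)
  hence "((\<lambda>h. nrm (- ((1/h) *\<^sub>R (u (t + h) - u t)) - - v)) \<longlongrightarrow> 0) (filtermap uminus (at 0))"
    unfolding nlim_def using filtermap_at_minus[of "0::real"] by simp
  thus ?thesis unfolding nlim_def filterlim_filtermap by (simp add: algebra_simps)
qed

end

locale dense_domain_space = semi_inner_space V P J for V :: "'b::real_vector set" and P J +
  fixes D :: "'b set"
  assumes domain_subset: "D \<subseteq> V"
    and add_in_domain: "x \<in> D \<Longrightarrow> y \<in> D \<Longrightarrow> x + y \<in> D"
    and scaleR_in_domain: "x \<in> D \<Longrightarrow> r *\<^sub>R x \<in> D"
    and nrm_eq_0_imp_zero: "x \<in> V \<Longrightarrow> nrm x = 0 \<Longrightarrow> x = 0"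
    and domain_dense: "x \<in> V \<Longrightarrow> e > 0 \<Longrightarrow> \<exists>y\<in>D. nrm (x - y) < e"
begin

lemma domain_in: "x \<in> D \<Longrightarrow> x \<in> V"
  using domain_subset by auto

lemma diff_in_domain: "x \<in> D \<Longrightarrow> y \<in> D \<Longrightarrow> x - y \<in> D"
  using add_in_domain[of x "-y"] scaleR_in_domain[of y "-1"] by simp

lemma nlim_unique:
  assumes "F \<noteq> bot" "nlim F f l" "nlim F f m" "eventually (\<lambda>x. f x \<in> V) F" "l \<in> V" "m \<in> V"
  shows "l = m"
  using nlim_unique_nrm[OF assms] nrm_eq_0_imp_zero[of "l - m"] diff_in assms(5,6) by simp

lemma nrm_bound_from_domain:
  assumes x: "x \<in> V" and M: "M \<ge> 0" and LV: "\<And>z. z \<in> V \<Longrightarrow> L z \<in> V"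
    and L_diff: "\<And>z1 z2. z1 \<in> V \<Longrightarrow> z2 \<in> V \<Longrightarrow> L (z1 - z2) = L z1 - L z2"
    and L_bounded: "\<And>z. z \<in> V \<Longrightarrow> nrm (L z) \<le> K * nrm z"
    and L_domain: "\<And>y. y \<in> D \<Longrightarrow> nrm (L y) \<le> M * nrm y"
  shows "nrm (L x) \<le> M * nrm x"
proof (rule field_le_epsilon)
  fix e :: real assume e: "e > 0"
  define C where "C = \<bar>K\<bar> + M + 1"
  have C: "C > 0" unfolding C_def using M by simp
  obtain y where y: "y \<in> D" "nrm (x - y) < e / C" using domain_dense[OF x, of "e / C"] e C by auto
  have yV: "y \<in> V" and xy: "x - y \<in> V" using x y domain_in diff_in by auto
  have "L x = L y + L (x - y)" using L_diff[OF x yV] by simp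
  hence "nrm (L x) \<le> nrm (L y) + nrm (L (x - y))" using nrm_triangle LV yV xy by simp
  also have "\<dots> \<le> M * nrm y + \<bar>K\<bar> * nrm (x - y)"
    using L_domain[OF y(1)] L_bounded[OF xy] nrm_nonneg[OF xy]
    by (smt (verit) abs_ge_self mult_right_mono)
  also have "M * nrm y \<le> M * nrm x + M * nrm (x - y)"
    using nrm_triangle[of x "y - x"] nrm_minus_commute[OF x yV] x yV diff_in M
    by (simp add: distrib_left[symmetric] mult_left_mono)
  also have "M * nrm x + M * nrm (x - y) + \<bar>K\<bar> * nrm (x - y) \<le> M * nrm x + e"
    using y(2) C nrm_nonneg[OF xy] unfolding C_def by (simp add: field_simps)
  finally show "nrm (L x) \<le> M * nrm x + e" by simp
qed

end

locale energy_bounded_operator = dense_domain_space V P J D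
  for V :: "'b::real_vector set" and P J D +
  fixes G :: "'b \<Rightarrow> 'b" and \<omega> :: real
  assumes G_in: "x \<in> D \<Longrightarrow> G x \<in> V"
    and G_add: "x \<in> D \<Longrightarrow> y \<in> D \<Longrightarrow> G (x + y) = G x + G y"
    and G_scaleR: "x \<in> D \<Longrightarrow> G (r *\<^sub>R x) = r *\<^sub>R G x"
    and energy_bound: "x \<in> D \<Longrightarrow> \<bar>Re (P x (G x))\<bar> \<le> \<omega> * nrm x ^ 2"
begin

lemma G_diff: "x \<in> D \<Longrightarrow> y \<in> D \<Longrightarrow> G (x - y) = G x - G y"
  using G_add[of x "-y"] G_scaleR[of y "-1"] scaleR_in_domain[of y "-1"] by simp

lemma solution_from_zero_vanishes:
  assumes t: "0 \<le> t" and wD: "\<And>s. 0 \<le> s \<Longrightarrow> s \<le> t \<Longrightarrow> w s \<in> D"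
    and cont: "\<And>s. 0 \<le> s \<Longrightarrow> s \<le> t \<Longrightarrow> ((\<lambda>r. nrm (w r - w s)) \<longlongrightarrow> 0) (at s within {0..t})"
    and der: "\<And>s. 0 \<le> s \<Longrightarrow> s < t \<Longrightarrow> nlim (at_right 0) (\<lambda>h. (1/h) *\<^sub>R (w (s + h) - w s)) (c *\<^sub>R G (w s))"
    and c: "\<bar>c\<bar> = 1" and w0: "w 0 = 0"
  shows "w t = 0"
proof -
  have "nrm (w t)^2 \<le> exp (2 * \<omega> * t) * nrm (w 0)^2"
  proof (rule nrm_growth_gronwall[OF t _ cont])
    fix s assume s: "0 \<le> s" "s < t"
    have wsV: "w s \<in> V" and GV: "G (w s) \<in> V" using wD s G_in domain_in by auto
    have "Re (P (w s) (c *\<^sub>R G (w s))) = c * Re (P (w s) (G (w s)))"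
      using ip_scaleR_right wsV GV by simp
    also have "\<dots> \<le> \<bar>Re (P (w s) (G (w s)))\<bar>" using c by (simp add: abs_mult abs_le_D1)
    also have "\<dots> \<le> \<omega> * nrm (w s)^2" using energy_bound wD s by simp
    finally show "c *\<^sub>R G (w s) \<in> V \<and> nlim (at_right 0) (\<lambda>h. (1/h) *\<^sub>R (w (s + h) - w s)) (c *\<^sub>R G (w s))
        \<and> Re (P (w s) (c *\<^sub>R G (w s))) \<le> \<omega> * nrm (w s)^2"
      using der[OF s] GV scaleR_in by simp
  qed (use wD domain_in in auto)
  hence "nrm (w t) = 0" using w0 by simp
  thus ?thesis using nrm_eq_0_imp_zero wD t domain_in by simp
qed

lemma global_solution_from_zero_vanishes:
  assumes wD: "\<And>s. w s \<in> D"
    and d: "\<And>s. nlim (at 0) (\<lambda>h. (1/h) *\<^sub>R (w (s + h) - w s)) (c *\<^sub>R G (w s))"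
    and c: "\<bar>c\<bar> = 1" and w0: "w 0 = 0" and t: "t \<ge> 0"
  shows "w t = 0"
proof -
  have wV: "w s \<in> V" and cGV: "c *\<^sub>R G (w s) \<in> V" for s
    using G_in wD domain_in scaleR_in by auto
  show ?thesis
  proof (rule solution_from_zero_vanishes[OF t])
    fix s
    show "((\<lambda>r. nrm (w r - w s)) \<longlongrightarrow> 0) (at s within {0..t})"
      by (rule tendsto_within_subset[OF nlim_derivative_imp_continuous[OF wV cGV d]]) simp
    show "nlim (at_right 0) (\<lambda>h. (1/h) *\<^sub>R (w (s + h) - w s)) (c *\<^sub>R G (w s))"
      using d[of s] unfolding nlim_def by (rule tendsto_within_subset) simp
  qed (use wD c w0 in auto)
qed

lemma solution_unique:
  assumes wD: "\<And>t. w t \<in> D"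
    and d: "\<And>t. nlim (at 0) (\<lambda>h. (1/h) *\<^sub>R (w (t + h) - w t)) (- G (w t))"
    and w0: "w t0 = 0"
  shows "w t = 0"
proof -
  have wV: "w s \<in> V" and GV: "- G (w s) \<in> V" for s using G_in wD domain_in uminus_in by auto
  show ?thesis
  proof (cases "t \<ge> t0")
    case True
    have "w (t0 + (t - t0)) = 0"
      by (rule global_solution_from_zero_vanishes[where w="\<lambda>s. w (t0 + s)" and c="-1"])
         (use wD d[of "t0 + _", unfolded add.assoc] w0 True in auto)
    thus ?thesis by simp
  next
    case False
    have "w (t0 - (t0 - t)) = 0"
    proof (rule global_solution_from_zero_vanishes[where w="\<lambda>s. w (t0 - s)" and c=1])
      fix s
      show "nlim (at 0) (\<lambda>h. (1/h) *\<^sub>R (w (t0 - (s + h)) - w (t0 - s))) (1 *\<^sub>R G (w (t0 - s)))"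
        using nlim_derivative_reflect[OF wV GV d, of "t0 - s"] by (simp add: algebra_simps)
    qed (use wD w0 False in auto)
    thus ?thesis by simp
  qed
qed

lemma solution_energy_derivative:
  assumes uD: "\<And>t. u t \<in> D" and d: "nlim (at 0) (\<lambda>h. (1/h) *\<^sub>R (u (t + h) - u t)) (- G (u t))"
  shows "((\<lambda>s. P (u s) (u s)) has_vector_derivative complex_of_real (- 2 * Re (P (u t) (G (u t))))) (at t)"
  using ip_self_has_derivative[OF _ _ d] uD domain_in G_in uminus_in ip_minus_right by simp

end

locale energy_bounded_semigroup = energy_bounded_operator V P J D G \<omega>
  for V :: "'b::real_vector set" and P J D G \<omega> +
  fixes T :: "real \<Rightarrow> 'b \<Rightarrow> 'b"
  assumes T_in: "t \<ge> 0 \<Longrightarrow> x \<in> V \<Longrightarrow> T t x \<in> V"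
    and T_add: "t \<ge> 0 \<Longrightarrow> x \<in> V \<Longrightarrow> y \<in> V \<Longrightarrow> T t (x + y) = T t x + T t y"
    and T_scaleR: "t \<ge> 0 \<Longrightarrow> x \<in> V \<Longrightarrow> T t (r *\<^sub>R x) = r *\<^sub>R T t x"
    and T_bounded: "t \<ge> 0 \<Longrightarrow> \<exists>K. \<forall>x\<in>V. nrm (T t x) \<le> K * nrm x"
    and T_0: "x \<in> V \<Longrightarrow> T 0 x = x"
    and T_add_time: "s \<ge> 0 \<Longrightarrow> t \<ge> 0 \<Longrightarrow> x \<in> V \<Longrightarrow> T (s + t) x = T s (T t x)"
    and T_continuous: "x \<in> V \<Longrightarrow> t \<ge> 0 \<Longrightarrow> ((\<lambda>s. nrm (T s x - T t x)) \<longlongrightarrow> 0) (at t within {0..})"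
    and generator_domain: "x \<in> V \<Longrightarrow> (\<exists>y\<in>V. nlim (at_right 0) (\<lambda>h. (1 / h) *\<^sub>R (T h x - x)) y) \<longleftrightarrow> x \<in> D"
    and generator: "x \<in> D \<Longrightarrow> nlim (at_right 0) (\<lambda>h. (1 / h) *\<^sub>R (T h x - x)) (- G x)"
begin

lemma T_uminus: "t \<ge> 0 \<Longrightarrow> x \<in> V \<Longrightarrow> T t (- x) = - T t x"
  using T_scaleR[of t x "-1"] by simp

lemma T_diff: "t \<ge> 0 \<Longrightarrow> x \<in> V \<Longrightarrow> y \<in> V \<Longrightarrow> T t (x - y) = T t x - T t y"
  using T_add[of t x "-y"] T_uminus[of t y] uminus_in by simp

lemma T_difference_quotient:
  assumes "t \<ge> 0" "h > 0" "x \<in> V"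
  shows "T t ((1 / h) *\<^sub>R (T h x - x)) = (1 / h) *\<^sub>R (T (t + h) x - T t x)"
    and "T (t + h) x = T h (T t x)"
  using assms T_add_time[of t h x] T_add_time[of h t x] T_scaleR T_diff T_in diff_in
  by (simp_all add: add.commute)

lemma T_generator_commute:
  assumes x: "x \<in> D" and t: "t \<ge> 0"
  shows "nlim (at_right 0) (\<lambda>h. (1/h) *\<^sub>R (T (t + h) x - T t x)) (T t (- G x))"
proof -
  have xV: "x \<in> V" and GxV: "- G x \<in> V" using x domain_in G_in uminus_in by auto
  obtain K where K: "\<forall>y\<in>V. nrm (T t y) \<le> K * nrm y" using T_bounded[OF t] by blast
  have "eventually (\<lambda>h. (1 / h) *\<^sub>R (T h x - x) \<in> V) (at_right 0)"
    using eventually_at_right_less by eventually_elim (use T_in xV in \<open>auto intro!: scaleR_in diff_in\<close>)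
  from nlim_bounded_operator[OF generator[OF x] this GxV]
  have "nlim (at_right 0) (\<lambda>h. T t ((1 / h) *\<^sub>R (T h x - x))) (T t (- G x))"
    using T_diff[OF t] K T_in[OF t] by blast
  moreover have "\<forall>\<^sub>F h in at_right 0. T t ((1 / h) *\<^sub>R (T h x - x)) = (1/h) *\<^sub>R (T (t + h) x - T t x)"
    using eventually_at_right_less by eventually_elim (rule T_difference_quotient(1)[OF t _ xV])
  ultimately show ?thesis by (rule nlim_cong)
qed

lemma T_shift_right_derivative:
  assumes x: "x \<in> D" and t: "t \<ge> 0"
  shows "nlim (at_right 0) (\<lambda>h. (1/h) *\<^sub>R (T h (T t x) - T t x)) (T t (- G x))"
proof (rule nlim_cong[OF T_generator_commute[OF x t]])
  show "\<forall>\<^sub>F h in at_right 0. (1/h) *\<^sub>R (T (t + h) x - T t x) = (1/h) *\<^sub>R (T h (T t x) - T t x)"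
    using eventually_at_right_less
    by eventually_elim (simp add: T_difference_quotient(2)[OF t _ domain_in[OF x]])
qed

lemma T_domain: "x \<in> D \<Longrightarrow> t \<ge> 0 \<Longrightarrow> T t x \<in> D"
  using generator_domain[of "T t x"] T_shift_right_derivative[of x t] T_in domain_in G_in uminus_in
  by blast

lemma G_T_commute:
  assumes x: "x \<in> D" and t: "t \<ge> 0"
  shows "G (T t x) = T t (G x)"
proof -
  have xV: "x \<in> V" and TxV: "T t x \<in> V" and TGV: "T t (- G x) \<in> V"
    using x t domain_in G_in uminus_in T_in by auto
  have TD: "T t x \<in> D" by (rule T_domain[OF x t])
  note T_shift_right_derivative[OF x t]
  moreover have "eventually (\<lambda>h. (1/h) *\<^sub>R (T h (T t x) - T t x) \<in> V) (at_right 0)"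
    using eventually_at_right_less by eventually_elim (use T_in TxV in \<open>auto intro!: scaleR_in diff_in\<close>)
  ultimately have "T t (- G x) = - G (T t x)"
    using nlim_unique[OF trivial_limit_at_right_real _ generator[OF TD]] TGV G_in[OF TD] uminus_in
    by blast
  thus ?thesis using T_uminus[OF t G_in[OF x]] by simp
qed

lemma T_right_derivative:
  assumes x: "x \<in> D" and t: "t \<ge> 0"
  shows "nlim (at_right 0) (\<lambda>h. (1/h) *\<^sub>R (T (t + h) x - T t x)) (- G (T t x))"
  using T_generator_commute[OF x t] G_T_commute[OF x t] T_uminus[OF t] G_in[OF x] by simp

lemma nrm_T_le_domain:
  assumes x: "x \<in> D" and t: "t \<ge> 0"
  shows "nrm (T t x) \<le> exp (\<omega> * t) * nrm x"
proof -
  have xV: "x \<in> V" using domain_in x by simp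
  have "nrm (T t x)^2 \<le> exp (2 * \<omega> * t) * nrm (T 0 x)^2"
  proof (rule nrm_growth_gronwall[OF t, where v="\<lambda>s. - G (T s x)"])
    fix s assume s: "0 \<le> s" "s \<le> t"
    show "T s x \<in> V" using T_in s xV by simp
    show "((\<lambda>r. nrm (T r x - T s x)) \<longlongrightarrow> 0) (at s within {0..t})"
      using T_continuous[OF xV s(1)] by (rule tendsto_within_subset) auto
  next
    fix s assume s: "0 \<le> s" "s < t"
    have TsD: "T s x \<in> D" using T_domain x s by simp
    show "- G (T s x) \<in> V \<and> nlim (at_right 0) (\<lambda>h. (1 / h) *\<^sub>R (T (s + h) x - T s x)) (- G (T s x)) \<and>
          Re (P (T s x) (- G (T s x))) \<le> \<omega> * (nrm (T s x))\<^sup>2"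
      using T_right_derivative[OF x s(1)] G_in[OF TsD] uminus_in ip_minus_right[OF domain_in[OF TsD] G_in[OF TsD]]
        energy_bound[OF TsD]
      by auto
  qed
  hence "nrm (T t x)^2 \<le> (exp (\<omega> * t) * nrm x)^2"
    using T_0[OF xV] by (simp add: power_mult_distrib exp_double[symmetric] mult.assoc)
  thus ?thesis using nrm_nonneg xV by (meson exp_ge_zero mult_nonneg_nonneg power2_le_imp_le)
qed

lemma nrm_T_le:
  assumes x: "x \<in> V" and t: "t \<ge> 0"
  shows "nrm (T t x) \<le> exp (\<omega> * t) * nrm x"
proof -
  obtain K where "\<forall>y\<in>V. nrm (T t y) \<le> K * nrm y" using T_bounded[OF t] by blast
  thus ?thesis
    by (intro nrm_bound_from_domain[OF x, where K=K]) (use T_in[OF t] T_diff[OF t] nrm_T_le_domain[OF _ t] in auto)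
qed


lemma T_continuous_right:
  "x \<in> V \<Longrightarrow> t \<ge> 0 \<Longrightarrow> ((\<lambda>s. nrm (T s x - T t x)) \<longlongrightarrow> 0) (at_right t)"
  using T_continuous by (rule tendsto_within_subset) auto

lemma T_continuous_left:
  assumes x: "x \<in> V" and t: "t > 0"
  shows "((\<lambda>s. nrm (T s x - T t x)) \<longlongrightarrow> 0) (at_left t)"
proof -
  have "((\<lambda>s. nrm (T s x - T t x)) \<longlongrightarrow> 0) (at t within {0..t})"
    using T_continuous[OF x less_imp_le[OF t]] by (rule tendsto_within_subset) auto
  thus ?thesis using at_within_Icc_at_left[OF t] by simp
qed

lemma T_continuous_reversed:
  assumes x: "x \<in> V" and s: "0 \<le> s" "s \<le> t"
  shows "((\<lambda>r. nrm (T (t - r) x - T (t - s) x)) \<longlongrightarrow> 0) (at s within {0..t})"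
proof -
  have "filterlim (\<lambda>r. t - r) (at (t - s) within {0..}) (at s within {0..t})"
    unfolding filterlim_at
    by (auto simp: eventually_at_filter intro!: tendsto_intros)
  from filterlim_compose[OF T_continuous[OF x] this] show ?thesis using s by simp
qed

lemma nlim_T_diagonal:
  assumes q: "nlim (at_right 0) q y" and qV: "\<And>h. h > 0 \<Longrightarrow> q h \<in> V" and y: "y \<in> V"
    and t: "t > 0"
  shows "nlim (at_right 0) (\<lambda>h. T (t - h) (q h)) (T t y)"
  unfolding nlim_def
proof (rule tendsto_sandwich[where f="\<lambda>_. 0"
      and h="\<lambda>h. exp (\<bar>\<omega>\<bar> * t) * nrm (q h - y) + nrm (T (t - h) y - T t y)"])
  have evh: "\<forall>\<^sub>F h in at_right 0. h \<in> {0<..<t}"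
    using eventually_at_right_real[of 0 t] t by simp
  then show "\<forall>\<^sub>F h in at_right 0. 0 \<le> nrm (T (t - h) (q h) - T t y)"
    by eventually_elim (use qV y t in \<open>auto intro!: nrm_nonneg diff_in T_in\<close>)
  show "\<forall>\<^sub>F h in at_right 0.
      nrm (T (t - h) (q h) - T t y) \<le> exp (\<bar>\<omega>\<bar> * t) * nrm (q h - y) + nrm (T (t - h) y - T t y)"
    using evh
  proof eventually_elim
    case (elim h)
    have th: "t - h \<ge> 0" using elim by simp
    have qd: "q h - y \<in> V" using qV elim y diff_in by simp
    have "T (t - h) (q h) - T t y = T (t - h) (q h - y) + (T (t - h) y - T t y)"
      using T_diff[OF th qV y] elim by simp
    hence "nrm (T (t - h) (q h) - T t y) \<le> nrm (T (t - h) (q h - y)) + nrm (T (t - h) y - T t y)"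
      using nrm_triangle T_in th qd y t diff_in by (metis less_eq_real_def)
    also have "nrm (T (t - h) (q h - y)) \<le> exp (\<omega> * (t - h)) * nrm (q h - y)"
      using nrm_T_le[OF qd th] .
    also have "\<dots> \<le> exp (\<bar>\<omega>\<bar> * t) * nrm (q h - y)"
    proof (intro mult_right_mono nrm_nonneg[OF qd])
      have "\<omega> * (t - h) \<le> \<bar>\<omega>\<bar> * (t - h)" using th by (simp add: mult_right_mono)
      also have "\<dots> \<le> \<bar>\<omega>\<bar> * t" using elim by (simp add: mult_left_mono)
      finally show "exp (\<omega> * (t - h)) \<le> exp (\<bar>\<omega>\<bar> * t)" by simp
    qed
    finally show ?case by simp
  qed
  have "filterlim (\<lambda>h. t - h) (at_left t) (at_right 0)"
    unfolding filterlim_at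
    using evh by (auto elim!: eventually_mono intro!: tendsto_eq_intros tendsto_ident_at)
  from filterlim_compose[OF T_continuous_left[OF y t] this]
  have "((\<lambda>h. exp (\<bar>\<omega>\<bar> * t) * nrm (q h - y) + nrm (T (t - h) y - T t y)) \<longlongrightarrow> exp (\<bar>\<omega>\<bar> * t) * 0 + 0) (at_right 0)"
    using q unfolding nlim_def by (intro tendsto_intros)
  thus "((\<lambda>h. exp (\<bar>\<omega>\<bar> * t) * nrm (q h - y) + nrm (T (t - h) y - T t y)) \<longlongrightarrow> 0) (at_right 0)"
    by simp
qed simp

lemma T_left_derivative:
  assumes x: "x \<in> D" and t: "t > 0"
  shows "nlim (at_right 0) (\<lambda>h. (1/h) *\<^sub>R (T (t - h) x - T t x)) (G (T t x))"
proof -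
  have xV: "x \<in> V" and GxV: "- G x \<in> V" using x domain_in G_in uminus_in by auto
  define q where "q h = (1 / h) *\<^sub>R (T h x - x)" for h
  have qV: "h > 0 \<Longrightarrow> q h \<in> V" for h unfolding q_def using T_in xV by (auto intro!: scaleR_in diff_in)
  have evh: "\<forall>\<^sub>F h in at_right 0. h \<in> {0<..<t}"
    using eventually_at_right_real[of 0 t] t by simp
  have "nlim (at_right 0) (\<lambda>h. T (t - h) (q h)) (T t (- G x))"
    by (rule nlim_T_diagonal[OF generator[OF x, folded q_def] qV GxV t])
  hence "nlim (at_right 0) (\<lambda>h. - T (t - h) (q h)) (- T t (- G x))"
    by (rule nlim_minus) (use evh t T_in qV GxV in \<open>auto elim!: eventually_mono\<close>)
  also have "- T t (- G x) = G (T t x)"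
    using G_T_commute[OF x] T_uminus G_in[OF x] t by simp
  finally have lim: "nlim (at_right 0) (\<lambda>h. - T (t - h) (q h)) (G (T t x))" .
  have "\<forall>\<^sub>F h in at_right 0. - T (t - h) (q h) = (1/h) *\<^sub>R (T (t - h) x - T t x)"
    using evh
  proof eventually_elim
    case (elim h)
    have th: "t - h \<ge> 0" "h \<ge> 0" using elim by auto
    have hx: "T h x \<in> V" using T_in th xV by simp
    have "T (t - h) (q h) = (1/h) *\<^sub>R (T (t - h) (T h x) - T (t - h) x)"
      unfolding q_def using T_scaleR[OF th(1) diff_in[OF hx xV]] T_diff[OF th(1) hx xV] by simp
    moreover have "T t x = T (t - h) (T h x)" using T_add_time[OF th xV] by simp
    ultimately show ?case by (simp add: algebra_simps)
  qed
  with lim show ?thesis by (rule nlim_cong)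
qed


lemma backward_semigroup_inverse_on_domain:
  assumes R: "energy_bounded_semigroup V P J D (\<lambda>x. - G x) \<omega>' R"
    and x: "x \<in> D" and t: "t \<ge> 0"
  shows "R t (T t x) = x"
proof -
  interpret R: energy_bounded_semigroup V P J D "\<lambda>x. - G x" \<omega>' R by (rule R)
  define y where "y = T t x"
  have xV: "x \<in> V" and yD: "y \<in> D" and yV: "y \<in> V"
    using x T_domain[OF x t] domain_in unfolding y_def by auto
  define w where "w s = T (t - s) x - R s y" for s
  have TD: "s \<le> t \<Longrightarrow> T (t - s) x \<in> D" and RD: "s \<ge> 0 \<Longrightarrow> R s y \<in> D" for s
    using T_domain[OF x] R.T_domain[OF yD] by auto
  have "w t = 0"
  proof (rule solution_from_zero_vanishes[OF t, where c=1])
    fix s assume s: "0 \<le> s" "s \<le> t"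
    show "w s \<in> D" unfolding w_def using TD RD s diff_in_domain by simp
    have "nlim (at s within {0..t}) (\<lambda>r. T (t - r) x - R r y) (T (t - s) x - R s y)"
    proof (rule nlim_diff)
      show "nlim (at s within {0..t}) (\<lambda>r. T (t - r) x) (T (t - s) x)"
        using T_continuous_reversed[OF xV s] unfolding nlim_def .
      show "nlim (at s within {0..t}) (\<lambda>r. R r y) (R s y)"
        using R.T_continuous[OF yV s(1)] unfolding nlim_def by (rule tendsto_within_subset) auto
      show "\<forall>\<^sub>F r in at s within {0..t}. T (t - r) x \<in> V \<and> R r y \<in> V"
        by (simp add: eventually_at_filter T_in R.T_in xV yV)
    qed (use TD RD s domain_in in auto)
    thus "((\<lambda>r. nrm (w r - w s)) \<longlongrightarrow> 0) (at s within {0..t})" unfolding nlim_def w_def .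
  next
    fix s assume s: "0 \<le> s" "s < t"
    have evh: "\<forall>\<^sub>F h in at_right 0. h \<in> {0<..<t - s}"
      using eventually_at_right_real[of 0 "t - s"] s by simp
    have "nlim (at_right 0) (\<lambda>h. (1/h) *\<^sub>R (T (t - s - h) x - T (t - s) x) - (1/h) *\<^sub>R (R (s + h) y - R s y))
        (G (T (t - s) x) - - (- G (R s y)))"
    proof (rule nlim_diff[OF T_left_derivative[OF x] R.T_right_derivative[OF yD s(1)]])
      show "t - s > 0" using s by simp
      show "\<forall>\<^sub>F h in at_right 0. (1/h) *\<^sub>R (T (t - s - h) x - T (t - s) x) \<in> V
          \<and> (1/h) *\<^sub>R (R (s + h) y - R s y) \<in> V"
        using evh by eventually_elim (use s xV yV in \<open>auto intro!: scaleR_in diff_in T_in R.T_in\<close>)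
    qed (use s TD RD domain_in G_in uminus_in in auto)
    moreover have "G (T (t - s) x) - - (- G (R s y)) = 1 *\<^sub>R G (w s)"
      unfolding w_def using G_diff TD RD s by simp
    ultimately show "nlim (at_right 0) (\<lambda>h. (1/h) *\<^sub>R (w (s + h) - w s)) (1 *\<^sub>R G (w s))"
      unfolding w_def by (simp add: algebra_simps)
  qed (simp_all add: w_def y_def R.T_0 T_in[OF t xV])
  thus ?thesis unfolding w_def y_def using T_0[OF xV] by simp
qed

lemma backward_semigroup_inverse:
  assumes R: "energy_bounded_semigroup V P J D (\<lambda>x. - G x) \<omega>' R"
    and x: "x \<in> V" and t: "t \<ge> 0"
  shows "R t (T t x) = x"
proof -
  interpret R: energy_bounded_semigroup V P J D "\<lambda>x. - G x" \<omega>' R by (rule R)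
  define L where "L z = R t (T t z) - z" for z
  have LV: "z \<in> V \<Longrightarrow> L z \<in> V" for z unfolding L_def using T_in R.T_in t diff_in by simp
  have "nrm (L x) \<le> 0 * nrm x"
  proof (rule nrm_bound_from_domain[OF x order_refl LV])
    fix z assume z: "z \<in> V"
    have "nrm (L z) \<le> nrm (R t (T t z)) + nrm z"
      unfolding L_def using nrm_triangle[of "R t (T t z)" "- z"] T_in R.T_in t z uminus_in nrm_minus by simp
    also have "\<dots> \<le> exp (\<omega>' * t) * (exp (\<omega> * t) * nrm z) + nrm z"
      using R.nrm_T_le[OF T_in[OF t z] t] nrm_T_le[OF z t] by (simp add: order_trans mult_left_mono)
    finally show "nrm (L z) \<le> (exp (\<omega>' * t) * exp (\<omega> * t) + 1) * nrm z" by (simp add: algebra_simps)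
  qed (use T_diff R.T_diff T_in t backward_semigroup_inverse_on_domain[OF R _ t] in \<open>auto simp: L_def\<close>)
  thus ?thesis using nrm_nonneg[OF LV[OF x]] nrm_eq_0_imp_zero[OF LV[OF x]] unfolding L_def by simp
qed

lemma compose_with_inverse:
  assumes R: "energy_bounded_semigroup V P J D G' \<omega>' R"
    and inverse: "\<And>t x. t \<ge> 0 \<Longrightarrow> x \<in> V \<Longrightarrow> T t (R t x) = x"
    and x: "x \<in> V" and "s \<ge> 0" "r \<ge> 0"
  shows "T s (R r x) = (if r \<le> s then T (s - r) x else R (r - s) x)"
proof -
  interpret R: energy_bounded_semigroup V P J D G' \<omega>' R by (rule R)
  show ?thesis
  proof (cases "r \<le> s")
    case True
    have "T s (R r x) = T (s - r) (T r (R r x))"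
      using T_add_time[of "s - r" r "R r x"] True assms R.T_in by simp
    thus ?thesis using inverse assms True by simp
  next
    case False
    have "R r x = R s (R (r - s) x)" using R.T_add_time[of s "r - s" x] False assms by simp
    thus ?thesis using inverse assms False R.T_in by simp
  qed
qed

end

locale semigroup_pair = energy_bounded_semigroup V P J D G \<omega> T
  for V :: "'b::real_vector set" and P J D G \<omega> T +
  fixes R :: "real \<Rightarrow> 'b \<Rightarrow> 'b"
  assumes backward: "energy_bounded_semigroup V P J D (\<lambda>x. - G x) \<omega> R"
begin

sublocale R: energy_bounded_semigroup V P J D "\<lambda>x. - G x" \<omega> R
  by (rule backward)

definition U :: "real \<Rightarrow> 'b \<Rightarrow> 'b" where
  "U t = (if 0 \<le> t then T t else R (- t))"

lemma T_backward_semigroup: "energy_bounded_semigroup V P J D (\<lambda>x. - (- G x)) \<omega> T"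
  by simp unfold_locales

lemma R_T_inverse: "t \<ge> 0 \<Longrightarrow> x \<in> V \<Longrightarrow> R t (T t x) = x"
  using backward_semigroup_inverse[OF backward] .

lemma T_R_inverse: "t \<ge> 0 \<Longrightarrow> x \<in> V \<Longrightarrow> T t (R t x) = x"
  using R.backward_semigroup_inverse[OF T_backward_semigroup] .

lemma U_in: "x \<in> V \<Longrightarrow> U t x \<in> V"
  unfolding U_def using T_in R.T_in by auto

lemma U_diff: "x \<in> V \<Longrightarrow> y \<in> V \<Longrightarrow> U t (x - y) = U t x - U t y"
  unfolding U_def using T_diff R.T_diff by auto

lemma U_scaleR: "x \<in> V \<Longrightarrow> U t (r *\<^sub>R x) = r *\<^sub>R U t x"
  unfolding U_def using T_scaleR R.T_scaleR by auto

lemma U_bounded: "\<exists>K. \<forall>x\<in>V. nrm (U t x) \<le> K * nrm x"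
  unfolding U_def using T_bounded R.T_bounded by (cases "0 \<le> t") auto

lemma U_0: "x \<in> V \<Longrightarrow> U 0 x = x"
  unfolding U_def using T_0 by simp

lemma U_add_time:
  assumes x: "x \<in> V"
  shows "U (s + t) x = U s (U t x)"
proof -
  have TR: "T s (R r x) = U (s - r) x" and RT: "R r (T s x) = U (s - r) x"
    if "s \<ge> 0" "r \<ge> 0" for s r
    using compose_with_inverse[OF backward T_R_inverse x that]
      R.compose_with_inverse[OF T_backward_semigroup R_T_inverse x that(2,1)]
    by (auto simp: U_def T_0[OF x] R.T_0[OF x])
  show ?thesis
    using T_add_time[OF _ _ x, of s t] R.T_add_time[OF _ _ x, of "- s" "- t"] TR[of s "- t"] RT[of t "- s"]
    by (cases "0 \<le> s"; cases "0 \<le> t") (auto simp: U_def algebra_simps)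
qed


lemma U_nonpos: "t \<le> 0 \<Longrightarrow> x \<in> V \<Longrightarrow> U t x = R (- t) x"
  unfolding U_def using T_0 R.T_0 by auto

lemma U_continuous_right:
  assumes x: "x \<in> V"
  shows "((\<lambda>s. nrm (U s x - U t x)) \<longlongrightarrow> 0) (at_right t)"
proof (cases "t \<ge> 0")
  case True
  have "\<forall>\<^sub>F s in at_right t. nrm (T s x - T t x) = nrm (U s x - U t x)"
    using eventually_at_right_less by eventually_elim (use True in \<open>auto simp: U_def\<close>)
  thus ?thesis using tendsto_cong T_continuous_right[OF x True] by fastforce
next
  case False
  have "((\<lambda>s. nrm (R s x - R (- t) x)) \<longlongrightarrow> 0) (at_left (- t))"
    using R.T_continuous_left[OF x] False by simp
  hence "((\<lambda>s. nrm (R (- s) x - R (- t) x)) \<longlongrightarrow> 0) (at_right t)"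
    unfolding at_right_minus[of t] filterlim_filtermap by simp
  moreover have "\<forall>\<^sub>F s in at_right t. nrm (R (- s) x - R (- t) x) = nrm (U s x - U t x)"
    using eventually_at_right_real[of t 0] False by (auto simp: U_def elim!: eventually_mono)
  ultimately show ?thesis using tendsto_cong by fastforce
qed

lemma U_continuous_left:
  assumes x: "x \<in> V"
  shows "((\<lambda>s. nrm (U s x - U t x)) \<longlongrightarrow> 0) (at_left t)"
proof (cases "t > 0")
  case True
  have "\<forall>\<^sub>F s in at_left t. nrm (T s x - T t x) = nrm (U s x - U t x)"
    using eventually_at_left_real[OF True] by eventually_elim (auto simp: U_def)
  thus ?thesis using tendsto_cong T_continuous_left[OF x True] by fastforce
next
  case False
  have "\<forall>\<^sub>F s in at_right (- t). nrm (R s x - R (- t) x) = nrm (U (- s) x - U t x)"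
    using eventually_at_right_less by eventually_elim (use False x in \<open>auto simp: U_nonpos\<close>)
  hence "((\<lambda>s. nrm (U (- s) x - U t x)) \<longlongrightarrow> 0) (at_right (- t))"
    using tendsto_cong R.T_continuous_right[OF x] False by fastforce
  thus ?thesis unfolding filterlim_at_left_to_right[of _ _ t] .
qed

lemma U_continuous: "x \<in> V \<Longrightarrow> ((\<lambda>s. nrm (U s x - U t x)) \<longlongrightarrow> 0) (at t)"
  using U_continuous_left U_continuous_right by (rule filterlim_split_at_real)

lemma U_domain: "x \<in> D \<Longrightarrow> U t x \<in> D"
  unfolding U_def using T_domain R.T_domain by auto

lemma G_U_commute:
  assumes x: "x \<in> D"
  shows "G (U t x) = U t (G x)"
proof (cases "0 \<le> t")
  case True
  thus ?thesis unfolding U_def using G_T_commute[OF x] by simp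
next
  case False
  have "- G (R (- t) x) = R (- t) (- G x)" using R.G_T_commute[OF x] False by simp
  thus ?thesis unfolding U_def using False R.T_uminus[OF _ G_in[OF x]] by simp
qed

lemma U_generator:
  assumes x: "x \<in> D"
  shows "nlim (at 0) (\<lambda>h. (1/h) *\<^sub>R (U h x - x)) (- G x)"
  unfolding nlim_def
proof (rule filterlim_split_at_real)
  have xV: "x \<in> V" using domain_in x by simp
  have "\<forall>\<^sub>F h in at_right 0. nrm ((1/h) *\<^sub>R (T h x - x) - - G x) = nrm ((1/h) *\<^sub>R (U h x - x) - - G x)"
    using eventually_at_right_less by eventually_elim (auto simp: U_def)
  thus "((\<lambda>h. nrm ((1/h) *\<^sub>R (U h x - x) - - G x)) \<longlongrightarrow> 0) (at_right 0)"
    using tendsto_cong generator[OF x] unfolding nlim_def by fastforce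
  have "\<forall>\<^sub>F h in at_right 0.
      nrm ((1/h) *\<^sub>R (R h x - x) - - (- G x)) = nrm ((1 / - h) *\<^sub>R (U (- h) x - x) - - G x)"
    using eventually_at_right_less
  proof eventually_elim
    case (elim h)
    have m: "(1/h) *\<^sub>R (R h x - x) - - (- G x) \<in> V"
      using elim xV G_in[OF x] R.T_in by (auto intro!: diff_in scaleR_in uminus_in)
    have "(1 / - h) *\<^sub>R (U (- h) x - x) - - G x = - ((1/h) *\<^sub>R (R h x - x) - - (- G x))"
      using elim by (simp add: U_def algebra_simps)
    thus ?case by (simp only: nrm_minus[OF m])
  qed
  hence "((\<lambda>h. nrm ((1 / - h) *\<^sub>R (U (- h) x - x) - - G x)) \<longlongrightarrow> 0) (at_right 0)"
    using tendsto_cong R.generator[OF x] unfolding nlim_def by fastforce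
  thus "((\<lambda>h. nrm ((1/h) *\<^sub>R (U h x - x) - - G x)) \<longlongrightarrow> 0) (at_left 0)"
    unfolding filterlim_at_left_to_right[of _ _ 0] by simp
qed

lemma U_derivative:
  assumes x: "x \<in> D"
  shows "nlim (at 0) (\<lambda>h. (1/h) *\<^sub>R (U (r + h) x - U r x)) (- G (U r x))"
proof -
  have xV: "x \<in> V" and GxV: "- G x \<in> V" using x domain_in G_in uminus_in by auto
  obtain K where K: "\<forall>y\<in>V. nrm (U r y) \<le> K * nrm y" using U_bounded by blast
  have "nlim (at 0) (\<lambda>h. U r ((1/h) *\<^sub>R (U h x - x))) (U r (- G x))"
    by (rule nlim_bounded_operator[OF U_generator[OF x] _ GxV])
       (use U_diff K U_in xV in \<open>auto intro!: always_eventually scaleR_in diff_in\<close>)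
  moreover have "U r ((1/h) *\<^sub>R (U h x - x)) = (1/h) *\<^sub>R (U (r + h) x - U r x)" for h
    using U_scaleR U_diff U_in xV diff_in U_add_time[OF xV, of r h] by simp
  moreover have "U r (- G x) = - G (U r x)"
    using G_U_commute[OF x] U_scaleR[of "G x" r "-1"] G_in[OF x] by simp
  ultimately show ?thesis by simp
qed

theorem solution_exists_unique:
  assumes x: "x \<in> D"
  shows "\<exists>!u. u t0 = x \<and> (\<forall>t. u t \<in> D \<and> nlim (at 0) (\<lambda>h. (1/h) *\<^sub>R (u (t + h) - u t)) (- G (u t)))"
proof (rule ex_ex1I)
  have "U (t0 - t0) x = x" using U_0 x domain_in by simp
  moreover have "U (t - t0) x \<in> D \<and> nlim (at 0) (\<lambda>h. (1/h) *\<^sub>R (U (t + h - t0) x - U (t - t0) x)) (- G (U (t - t0) x))"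
    for t
    using U_domain[OF x] U_derivative[OF x, of "t - t0"] by (simp add: algebra_simps)
  ultimately show "\<exists>u. u t0 = x \<and> (\<forall>t. u t \<in> D \<and> nlim (at 0) (\<lambda>h. (1/h) *\<^sub>R (u (t + h) - u t)) (- G (u t)))"
    by (intro exI[of _ "\<lambda>t. U (t - t0) x"]) simp
next
  fix u1 u2
  assume u1: "u1 t0 = x \<and> (\<forall>t. u1 t \<in> D \<and> nlim (at 0) (\<lambda>h. (1/h) *\<^sub>R (u1 (t + h) - u1 t)) (- G (u1 t)))"
    and u2: "u2 t0 = x \<and> (\<forall>t. u2 t \<in> D \<and> nlim (at 0) (\<lambda>h. (1/h) *\<^sub>R (u2 (t + h) - u2 t)) (- G (u2 t)))"
  have "u1 t - u2 t = 0" for t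
  proof (rule solution_unique[of "\<lambda>t. u1 t - u2 t" t0])
    fix t
    show "u1 t - u2 t \<in> D" using u1 u2 diff_in_domain by simp
    have "nlim (at 0) (\<lambda>h. (1/h) *\<^sub>R (u1 (t + h) - u1 t) - (1/h) *\<^sub>R (u2 (t + h) - u2 t)) (- G (u1 t) - - G (u2 t))"
      by (rule nlim_diff)
         (use u1 u2 domain_in G_in in \<open>auto intro!: always_eventually scaleR_in diff_in uminus_in\<close>)
    moreover have "- G (u1 t) - - G (u2 t) = - G (u1 t - u2 t)" using G_diff u1 u2 by simp
    moreover have "(\<lambda>h. (1/h) *\<^sub>R (u1 (t + h) - u1 t) - (1/h) *\<^sub>R (u2 (t + h) - u2 t))
        = (\<lambda>h. (1/h) *\<^sub>R (u1 (t + h) - u2 (t + h) - (u1 t - u2 t)))"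
      by (simp add: algebra_simps)
    ultimately show "nlim (at 0) (\<lambda>h. (1/h) *\<^sub>R (u1 (t + h) - u2 (t + h) - (u1 t - u2 t))) (- G (u1 t - u2 t))"
      by simp
  qed (use u1 u2 in simp)
  thus "u1 = u2" by (simp add: fun_eq_iff)
qed

end

lemma linear_le_quadratic_imp_zero:
  fixes a b :: real
  assumes a: "a \<ge> 0" and le: "\<And>t. 2 * t * b \<le> t^2 * a"
  shows "b = 0"
proof -
  define t where "t = b / (a + 1)"
  have bt: "b = t * (a + 1)" unfolding t_def using a by simp
  have "2 * t * (t * (a + 1)) \<le> t^2 * a" using le[of t] bt by simp
  hence "t^2 * (a + 2) \<le> 0" by (simp add: power2_eq_square algebra_simps)
  hence "t^2 \<le> 0" using a by (simp add: mult_le_0_iff)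
  hence "t = 0" by simp
  thus ?thesis using bt by simp
qed

locale complete_inner_space = semi_inner_space "UNIV :: 'b::real_vector set" P J for P J +
  assumes nrm_eq_0_iff: "nrm x = 0 \<longleftrightarrow> x = 0"
    and nrm_Cauchy_convergent:
      "(\<And>e. e > 0 \<Longrightarrow> \<exists>M. \<forall>m\<ge>M. \<forall>n\<ge>M. nrm (f m - f n) < e) \<Longrightarrow> \<exists>l. nlim sequentially f l"
begin

lemma orthogonal_dense_zero:
  assumes dense: "\<And>x e. e > 0 \<Longrightarrow> \<exists>y\<in>D. nrm (x - y) < e" and orth: "\<forall>w\<in>D. P w u = 0"
  shows "u = 0"
proof -
  have "nrm u \<le> 0 + e" if e: "e > 0" for e
  proof (cases "nrm u = 0")
    case False
    hence pos: "nrm u > 0" using nrm_nonneg[of u] by simp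
    obtain w where w: "w \<in> D" "nrm (u - w) < e" using dense[OF e] by blast
    have "nrm u * nrm u = Re (P (u - w) u + P w u)"
      using nrm_square[of u] ip_diff_left[of u w u] by (simp add: power2_eq_square)
    also have "\<dots> \<le> nrm (u - w) * nrm u" using orth w Re_ip_le_nrm_mult by simp
    also have "\<dots> \<le> e * nrm u" using w(2) pos by simp
    finally show ?thesis using pos by simp
  qed (use e in simp)
  hence "nrm u \<le> 0" by (rule field_le_epsilon)
  thus ?thesis using nrm_nonneg[of u] nrm_eq_0_iff by simp
qed

lemma minimizing_sequence_Cauchy:
  assumes M_add: "\<And>y z. y \<in> M \<Longrightarrow> z \<in> M \<Longrightarrow> y + z \<in> M"
    and M_scaleR: "\<And>y r. y \<in> M \<Longrightarrow> r *\<^sub>R y \<in> M"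
    and \<delta>: "\<delta> \<ge> 0" "\<And>y. y \<in> M \<Longrightarrow> \<delta> \<le> nrm (x - y)"
    and f: "\<And>n. f n \<in> M" "\<And>n. nrm (x - f n)^2 \<le> \<delta>^2 + 1 / (real n + 1)"
  shows "nrm (f m - f n)^2 \<le> 2 / (real m + 1) + 2 / (real n + 1)"
proof -
  define a b where "a = x - f n" and "b = x - f m"
  have mid: "(1/2) *\<^sub>R (f n + f m) \<in> M" using f M_add M_scaleR by simp
  have "a + b = 2 *\<^sub>R (x - (1/2) *\<^sub>R (f n + f m))"
    unfolding a_def b_def by (simp add: algebra_simps scaleR_2)
  hence "nrm (a + b) = 2 * nrm (x - (1/2) *\<^sub>R (f n + f m))" using nrm_scaleR by simp
  hence ab: "4 * \<delta>^2 \<le> nrm (a + b)^2" using \<delta>(2)[OF mid] \<delta>(1)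
    by (simp add: power_mult_distrib power_mono)
  have "nrm (f m - f n)^2 = 2 * nrm a^2 + 2 * nrm b^2 - nrm (a + b)^2"
    using nrm_parallelogram[of a b] unfolding a_def b_def by simp
  also have "\<dots> \<le> 2 * (\<delta>^2 + 1 / (real n + 1)) + 2 * (\<delta>^2 + 1 / (real m + 1)) - 4 * \<delta>^2"
    using f(2)[of n] f(2)[of m] ab unfolding a_def b_def by simp
  finally show ?thesis by simp
qed

lemma nrm_Cauchy_convergent_rate:
  assumes "\<And>m n. nrm (f m - f n)^2 \<le> 2 / (real m + 1) + 2 / (real n + 1)"
  shows "\<exists>l. nlim sequentially f l"
proof (rule nrm_Cauchy_convergent)
  fix e :: real assume e: "e > 0"
  obtain M :: nat where M: "4 / e^2 < real M" using reals_Archimedean2 by blast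
  show "\<exists>M. \<forall>m\<ge>M. \<forall>n\<ge>M. nrm (f m - f n) < e"
  proof (intro exI allI impI)
    fix m n assume mn: "M \<le> m" "M \<le> n"
    have "2 / (real m + 1) \<le> 2 / (real M + 1)" "2 / (real n + 1) \<le> 2 / (real M + 1)"
      using mn by (simp_all add: frac_le)
    moreover have "4 / e^2 < real M + 1" using M by simp
    hence "4 / (real M + 1) < e^2" using e by (simp add: field_simps)
    ultimately have "nrm (f m - f n)^2 < e^2" using assms[of m n] by simp
    thus "nrm (f m - f n) < e" using e nrm_nonneg by (meson UNIV_I power_less_imp_less_base less_le)
  qed
qed

lemma nearest_point_exists:
  assumes M: "0 \<in> M" "\<And>y z. y \<in> M \<Longrightarrow> z \<in> M \<Longrightarrow> y + z \<in> M" "\<And>y r. y \<in> M \<Longrightarrow> r *\<^sub>R y \<in> M"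
    and closed: "\<And>f l. (\<And>n. f n \<in> M) \<Longrightarrow> nlim sequentially f l \<Longrightarrow> l \<in> M"
  shows "\<exists>m\<in>M. \<forall>y\<in>M. nrm (x - m) \<le> nrm (x - y)"
proof -
  define \<delta> where "\<delta> = (INF y\<in>M. nrm (x - y))"
  have bdd: "bdd_below ((\<lambda>y. nrm (x - y)) ` M)" using nrm_nonneg by (auto intro: bdd_belowI[of _ 0])
  have \<delta>_le: "\<delta> \<le> nrm (x - y)" if "y \<in> M" for y unfolding \<delta>_def using bdd that by (rule cINF_lower)
  have \<delta>0: "\<delta> \<ge> 0" unfolding \<delta>_def using M(1) nrm_nonneg by (intro cINF_greatest) auto
  have "\<exists>y\<in>M. nrm (x - y)^2 \<le> \<delta>^2 + 1 / (real n + 1)" for n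
  proof -
    have "\<delta> < sqrt (\<delta>^2 + 1 / (real n + 1))" by (rule real_less_rsqrt) simp
    then obtain y where y: "y \<in> M" "nrm (x - y) < sqrt (\<delta>^2 + 1 / (real n + 1))"
      using cINF_less_iff[OF _ bdd] M(1) unfolding \<delta>_def by blast
    hence "nrm (x - y)^2 \<le> (sqrt (\<delta>^2 + 1 / (real n + 1)))^2"
      using nrm_nonneg by (intro power_mono) auto
    thus ?thesis using y(1) by (auto simp: add_nonneg_nonneg)
  qed
  hence "\<forall>n. \<exists>y. y \<in> M \<and> nrm (x - y)^2 \<le> \<delta>^2 + 1 / (real n + 1)" by blast
  from choice[OF this] obtain f
    where f: "\<And>n. f n \<in> M" "\<And>n. nrm (x - f n)^2 \<le> \<delta>^2 + 1 / (real n + 1)"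
    by blast
  obtain m where m: "nlim sequentially f m"
    using nrm_Cauchy_convergent_rate[OF minimizing_sequence_Cauchy[OF M(2,3) \<delta>0 \<delta>_le f]] by blast
  have l1: "(\<lambda>n. nrm (x - f n)) \<longlonglongrightarrow> nrm (x - m)"
  proof (rule Lim_null[THEN iffD2], rule Lim_null_comparison)
    show "\<forall>\<^sub>F n in sequentially. norm (nrm (x - f n) - nrm (x - m)) \<le> nrm (f n - m)"
      using nrm_reverse_triangle[of "x - f _" "x - m"] by (simp add: nrm_minus_commute)
  qed (use m in \<open>simp add: nlim_def\<close>)
  have "(\<lambda>n. 1 / (real n + 1)) \<longlonglongrightarrow> 0"
    using LIMSEQ_Suc[OF lim_1_over_n] by (simp add: add.commute)
  hence l2: "(\<lambda>n. \<delta>^2 + 1 / (real n + 1)) \<longlonglongrightarrow> \<delta>^2 + 0" by (intro tendsto_intros)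
  have "nrm (x - m)^2 \<le> \<delta>^2 + 0"
    by (rule LIMSEQ_le[OF tendsto_power[OF l1] l2]) (use f(2) in auto)
  hence "nrm (x - m) \<le> \<delta>" using power2_le_imp_le[OF _ \<delta>0] by simp
  hence "nrm (x - m) \<le> nrm (x - y)" if "y \<in> M" for y using \<delta>_le[OF that] by simp
  with closed[OF f(1) m] show ?thesis by blast
qed

lemma nearest_point_orthogonal:
  assumes M: "\<And>y z. y \<in> M \<Longrightarrow> z \<in> M \<Longrightarrow> y + z \<in> M" "\<And>y r. y \<in> M \<Longrightarrow> r *\<^sub>R y \<in> M"
      "\<And>y. y \<in> M \<Longrightarrow> J y \<in> M"
    and m: "m \<in> M" "\<And>y. y \<in> M \<Longrightarrow> nrm (x - m) \<le> nrm (x - y)"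
    and v: "v \<in> M"
  shows "P (x - m) v = 0"
proof -
  have Re0: "Re (P (x - m) v) = 0" if v: "v \<in> M" for v
  proof -
    have "2 * t * Re (P (x - m) v) \<le> t^2 * nrm v^2" for t
    proof -
      have "m + t *\<^sub>R v \<in> M" using M(1)[OF m(1) M(2)[OF v]] .
      hence "nrm (x - m)^2 \<le> nrm (x - (m + t *\<^sub>R v))^2"
        using power_mono[OF m(2) nrm_nonneg[OF UNIV_I]] by blast
      also have "x - (m + t *\<^sub>R v) = (x - m) + (- t) *\<^sub>R v" by (simp add: algebra_simps)
      finally show ?thesis using nrm_add_scaleR_square[of "x - m" v "- t"] by simp
    qed
    thus ?thesis by (rule linear_le_quadratic_imp_zero[OF zero_le_power2])
  qed
  have "Im (P (x - m) v) = - Re (P (x - m) (J v))" using ip_J_right by simp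
  thus ?thesis using Re0[OF v] Re0[OF M(3)[OF v]] by (simp add: complex_eq_iff)
qed

end

lemma cscale_of_real [simp]: "cscale J (complex_of_real r) x = r *\<^sub>R x"
  unfolding cscale_def by simp

lemma cscale_i [simp]: "cscale J \<i> x = J x"
  unfolding cscale_def by simp

lemma cscale_minus_i [simp]: "cscale J (- \<i>) x = - J x"
  unfolding cscale_def by simp

lemma pscale_of_real: "pscale J (complex_of_real r) x = r *\<^sub>R x"
  unfolding pscale_def by (simp add: prod_eq_iff)

lemma complex_structure_linear:
  assumes "complex_structure J"
  shows "J (x + y) = J x + J y" "J (- x) = - J x" "J (r *\<^sub>R x) = r *\<^sub>R J x" "J 0 = 0"
    "J (x - y) = J x - J y" "J (J x) = - x"
  using assms unfolding complex_structure_def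
  by (auto simp: linear_add linear_neg linear_scale linear_0 linear_diff)

lemma lin_on_real_linear:
  assumes "lin_on J D f"
  shows "0 \<in> D" "x \<in> D \<Longrightarrow> y \<in> D \<Longrightarrow> x + y \<in> D" "x \<in> D \<Longrightarrow> r *\<^sub>R x \<in> D" "x \<in> D \<Longrightarrow> J x \<in> D"
    "x \<in> D \<Longrightarrow> y \<in> D \<Longrightarrow> f (x + y) = f x + f y" "x \<in> D \<Longrightarrow> f (r *\<^sub>R x) = r *\<^sub>R f x"
    "x \<in> D \<Longrightarrow> f (J x) = J (f x)"
proof -
  have D: "csubspace_on J D" and f: "\<forall>x\<in>D. \<forall>y\<in>D. f (x + y) = f x + f y"
      "\<forall>c. \<forall>x\<in>D. f (cscale J c x) = cscale J c (f x)"
    using assms unfolding lin_on_def by blast+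
  show "0 \<in> D" "x \<in> D \<Longrightarrow> y \<in> D \<Longrightarrow> x + y \<in> D" using D unfolding csubspace_on_def by blast+
  show "x \<in> D \<Longrightarrow> r *\<^sub>R x \<in> D" "x \<in> D \<Longrightarrow> J x \<in> D"
    using D unfolding csubspace_on_def by (metis cscale_of_real, metis cscale_i)
  show "x \<in> D \<Longrightarrow> y \<in> D \<Longrightarrow> f (x + y) = f x + f y" using f(1) by blast
  show "x \<in> D \<Longrightarrow> f (r *\<^sub>R x) = r *\<^sub>R f x" "x \<in> D \<Longrightarrow> f (J x) = J (f x)"
    using f(2) by (metis cscale_of_real, metis cscale_i)
qed

lemma lin_on_diff:
  assumes f: "lin_on J D f" and x: "x \<in> D" and y: "y \<in> D"
  shows "x - y \<in> D" "f (x - y) = f x - f y"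
proof -
  have "(-1) *\<^sub>R y \<in> D" "f ((-1) *\<^sub>R y) = - f y"
    using lin_on_real_linear(3,6)[OF f y, of "-1"] by simp_all
  thus "x - y \<in> D" "f (x - y) = f x - f y"
    using lin_on_real_linear(2,5)[OF f x] by (metis add_uminus_conv_diff scaleR_minus1_left)+
qed

lemma lin_on_zero:
  assumes "lin_on J D f" shows "f 0 = 0"
  using lin_on_real_linear(6)[OF assms lin_on_real_linear(1)[OF assms], of 0] by simp

lemma cinner_space_semi_inner_space:
  assumes "cinner_space J ip"
  shows "semi_inner_space UNIV ip J"
proof -
  note ci = assms[unfolded cinner_space_def]
  have commute: "\<forall>x y. ip x y = cnj (ip y x)" using ci by (elim conjE) assumption
  have add: "\<forall>x y z. ip x (y + z) = ip x y + ip x z" using ci by (elim conjE) assumption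
  have scale: "\<forall>c x y. ip x (cscale J c y) = c * ip x y" using ci by (elim conjE) assumption
  have pos: "\<forall>x. 0 \<le> Re (ip x x)" using ci by (elim conjE) assumption
  show ?thesis
  proof
    fix x y z :: 'a and r :: real
    show "ip x y = cnj (ip y x)" by (rule commute[rule_format])
    show "ip x (y + z) = ip x y + ip x z" by (rule add[rule_format])
    show "0 \<le> Re (ip x x)" by (rule pos[rule_format])
    show "ip x (r *\<^sub>R y) = complex_of_real r * ip x y"
      using scale[rule_format, of x "complex_of_real r" y] by simp
    show "ip x (J y) = \<i> * ip x y" using scale[rule_format, of x \<i> y] by simp
  qed simp_all
qed

lemma cnorm_eq_nrm: "semi_inner_space V ip J \<Longrightarrow> semi_inner_space.nrm ip = cnorm ip"
  by (rule ext) (simp add: semi_inner_space.nrm_def cnorm_def)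

lemma hilbert_space_complete_inner_space:
  assumes "hilbert_space J ip"
  shows "complete_inner_space ip J"
proof -
  have ci: "cinner_space J ip" using assms unfolding hilbert_space_def by simp
  interpret X: semi_inner_space UNIV ip J by (rule cinner_space_semi_inner_space[OF ci])
  have nrm: "X.nrm = cnorm ip" by (rule cnorm_eq_nrm[OF X.semi_inner_space_axioms])
  show ?thesis
  proof unfold_locales
    fix x :: 'a
    have "\<forall>x. ip x x = 0 \<longrightarrow> x = 0" using ci unfolding cinner_space_def by blast
    thus "X.nrm x = 0 \<longleftrightarrow> x = 0" using X.ip_self_eq[of x] by auto
  next
    fix f :: "nat \<Rightarrow> 'a"
    assume "\<And>e. 0 < e \<Longrightarrow> \<exists>M. \<forall>m\<ge>M. \<forall>n\<ge>M. X.nrm (f m - f n) < e"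
    hence "\<forall>e>0. \<exists>M. \<forall>m\<ge>M. \<forall>n\<ge>M. cnorm ip (f m - f n) < e" unfolding nrm by blast
    moreover have "\<forall>f :: nat \<Rightarrow> 'a. (\<forall>e>0. \<exists>N. \<forall>m\<ge>N. \<forall>n\<ge>N. cnorm ip (f m - f n) < e) \<longrightarrow>
        (\<exists>l. (\<lambda>n. cnorm ip (f n - l)) \<longlonglongrightarrow> 0)"
      using assms unfolding hilbert_space_def by (rule conjunct2)
    ultimately show "\<exists>l. X.nlim sequentially f l" unfolding X.nlim_def nrm by blast
  qed
qed

locale positive_self_adjoint = complete_inner_space P J
  for P :: "'b::real_vector \<Rightarrow> 'b \<Rightarrow> complex" and J +
  fixes DA :: "'b set" and A :: "'b \<Rightarrow> 'b" and \<epsilon> :: real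
  assumes self_adjoint: "self_adjoint J P DA A"
    and eps_pos: "\<epsilon> > 0"
    and positive: "x \<in> DA \<Longrightarrow> \<epsilon> * Re (P x x) \<le> Re (P x (A x))"
begin

lemma A_lin_on: "lin_on J DA A"
  using self_adjoint unfolding self_adjoint_def by blast

lemmas A_real_linear = lin_on_real_linear[OF A_lin_on]

lemma domain_dense: "e > 0 \<Longrightarrow> \<exists>y\<in>DA. nrm (x - y) < e"
  using self_adjoint cnorm_eq_nrm[OF semi_inner_space_axioms]
  unfolding self_adjoint_def dense_in_def by simp

lemma A_symmetric: "x \<in> DA \<Longrightarrow> y \<in> DA \<Longrightarrow> P (A x) y = P x (A y)"
  using self_adjoint unfolding self_adjoint_def symmetric_op_def by blast

lemma adjoint_eq:
  assumes "\<forall>w\<in>DA. P (A w) y = P w z"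
  shows "y \<in> DA" "A y = z"
proof -
  show yD: "y \<in> DA" using self_adjoint assms unfolding self_adjoint_def by blast
  have "\<forall>w\<in>DA. P w (A y - z) = 0" using assms A_symmetric[OF _ yD] ip_diff_right by simp
  from orthogonal_dense_zero[OF domain_dense this] show "A y = z" by simp
qed

lemma nrm_le_A: "y \<in> DA \<Longrightarrow> \<epsilon> * nrm y \<le> nrm (A y)"
proof -
  assume y: "y \<in> DA"
  have "\<epsilon> * nrm y * nrm y = \<epsilon> * Re (P y y)" using nrm_square[of y] by (simp add: power2_eq_square)
  also have "\<dots> \<le> nrm y * nrm (A y)" using positive[OF y] Re_ip_le_nrm_mult[of y "A y"] by simp
  finally have "nrm y * (\<epsilon> * nrm y) \<le> nrm y * nrm (A y)" by (simp add: ac_simps)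
  moreover have "nrm y > 0 \<or> nrm y = 0" using nrm_nonneg[of y] by auto
  ultimately show ?thesis using mult_le_cancel_left_pos[of "nrm y"] nrm_nonneg[of "A y"] by auto
qed

text \<open>\<open>A\<close> is closed and bounded below, hence has closed range.\<close>

lemma range_closed:
  assumes f: "\<And>n. f n \<in> A ` DA" and f_lim: "nlim sequentially f z"
  shows "z \<in> A ` DA"
proof -
  have "\<forall>n. \<exists>y. y \<in> DA \<and> f n = A y" using f by blast
  from choice[OF this] obtain ys where ys: "\<And>n. ys n \<in> DA" and f_eq: "\<And>n. f n = A (ys n)"
    by blast
  have "f = (\<lambda>n. A (ys n))" using f_eq by (rule ext)
  hence lim: "nlim sequentially (\<lambda>n. A (ys n)) z" using f_lim by simp
  have "\<exists>y. nlim sequentially ys y"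
  proof (rule nrm_Cauchy_convergent)
    fix e :: real assume e: "e > 0"
    hence "\<forall>\<^sub>F n in sequentially. nrm (A (ys n) - z) < \<epsilon> * e / 2"
      using lim eps_pos unfolding nlim_def by (intro order_tendstoD(2)) auto
    then obtain M where M: "\<And>n. n \<ge> M \<Longrightarrow> nrm (A (ys n) - z) < \<epsilon> * e / 2"
      unfolding eventually_sequentially by blast
    have "nrm (ys m - ys n) < e" if "m \<ge> M" "n \<ge> M" for m n
    proof -
      have "\<epsilon> * nrm (ys m - ys n) \<le> nrm (A (ys m) - A (ys n))"
        using nrm_le_A[of "ys m - ys n"] lin_on_diff[OF A_lin_on ys ys] by simp
      also have "\<dots> \<le> nrm (A (ys m) - z) + nrm (A (ys n) - z)"
        using nrm_triangle_diff[of "A (ys m)" z "A (ys n)"] nrm_minus_commute[of z] by simp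
      also have "\<dots> < \<epsilon> * e" using M[OF that(1)] M[OF that(2)] by simp
      finally show ?thesis using eps_pos by simp
    qed
    thus "\<exists>M. \<forall>m\<ge>M. \<forall>n\<ge>M. nrm (ys m - ys n) < e" by blast
  qed
  then obtain y where y: "nlim sequentially ys y" by blast
  have "P (A w) y = P w z" if w: "w \<in> DA" for w
  proof (rule LIMSEQ_unique)
    show "(\<lambda>n. P (A w) (ys n)) \<longlonglongrightarrow> P (A w) y" by (rule nlim_ip_right[OF y]) simp_all
    show "(\<lambda>n. P (A w) (ys n)) \<longlonglongrightarrow> P w z"
      unfolding A_symmetric[OF w ys] by (rule nlim_ip_right[OF lim]) simp_all
  qed
  thus ?thesis using adjoint_eq by blast
qed

theorem A_surj: "\<exists>y\<in>DA. A y = x"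
proof -
  have M: "0 \<in> A ` DA" "\<And>u v. u \<in> A ` DA \<Longrightarrow> v \<in> A ` DA \<Longrightarrow> u + v \<in> A ` DA"
    "\<And>u r. u \<in> A ` DA \<Longrightarrow> r *\<^sub>R u \<in> A ` DA" "\<And>u. u \<in> A ` DA \<Longrightarrow> J u \<in> A ` DA"
  proof -
    show "0 \<in> A ` DA"
      by (rule rev_image_eqI[OF A_real_linear(1)]) (simp add: lin_on_zero[OF A_lin_on])
    fix u v r assume "u \<in> A ` DA"
    then obtain a where a: "a \<in> DA" "u = A a" by blast
    show "r *\<^sub>R u \<in> A ` DA"
      by (rule rev_image_eqI[OF A_real_linear(3)[OF a(1), of r]]) (simp add: a(2) A_real_linear(6)[OF a(1)])
    show "J u \<in> A ` DA"
      by (rule rev_image_eqI[OF A_real_linear(4)[OF a(1)]]) (simp add: a(2) A_real_linear(7)[OF a(1)])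
    assume "v \<in> A ` DA"
    then obtain b where b: "b \<in> DA" "v = A b" by blast
    show "u + v \<in> A ` DA"
      by (rule rev_image_eqI[OF A_real_linear(2)[OF a(1) b(1)]])
         (simp add: a(2) b(2) A_real_linear(5)[OF a(1) b(1)])
  qed
  have "\<exists>m\<in>A ` DA. \<forall>u\<in>A ` DA. nrm (x - m) \<le> nrm (x - u)"
    by (rule nearest_point_exists[OF M(1-3) range_closed])
  then obtain m where m: "m \<in> A ` DA" "\<forall>u\<in>A ` DA. nrm (x - m) \<le> nrm (x - u)" ..
  from m(1) obtain y where y: "y \<in> DA" and m_eq: "m = A y" by (rule imageE) simp
  have "P (A w) (x - A y) = P w 0" if w: "w \<in> DA" for w
  proof -
    have "P (x - A y) (A w) = 0"
      using nearest_point_orthogonal[OF M(2-4) m(1) bspec[OF m(2)] imageI[OF w]] m_eq by simp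
    thus ?thesis using ip_commute[of "A w" "x - A y"] ip_zero_right[of w] by simp
  qed
  hence r: "x - A y \<in> DA" "A (x - A y) = 0" using adjoint_eq[of "x - A y" 0] by blast+
  have "\<epsilon> * Re (P (x - A y) (x - A y)) \<le> 0" using positive[OF r(1)] r(2) ip_zero_right by simp
  hence "nrm (x - A y)^2 \<le> 0" using eps_pos nrm_square[of "x - A y"] by (simp add: mult_le_0_iff)
  hence "nrm (x - A y) = 0" by simp
  hence "x = A y" using nrm_eq_0_iff by simp
  thus ?thesis using y by blast
qed

end

lemma Yset_iff: "x \<in> Yset DS \<longleftrightarrow> fst x \<in> DS"
  unfolding Yset_def by (cases x) auto

lemma Y_semi_inner_space:
  assumes ci: "cinner_space J ip" and S: "lin_on J DS S"
  shows "semi_inner_space (Yset DS) (ipY ip S) (pscale J \<i>)"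
proof -
  interpret X: semi_inner_space UNIV ip J by (rule cinner_space_semi_inner_space[OF ci])
  note S_lin = lin_on_real_linear[OF S]
  show ?thesis
  proof
    fix x y z :: "'a \<times> 'a" and r :: real
    assume x: "x \<in> Yset DS" and y: "y \<in> Yset DS" and z: "z \<in> Yset DS"
    show "x + y \<in> Yset DS" "r *\<^sub>R x \<in> Yset DS" "pscale J \<i> x \<in> Yset DS"
      using x y S_lin(2-4) by (simp_all add: Yset_iff pscale_def)
    show "ipY ip S x y = cnj (ipY ip S y x)"
      unfolding ipY_def using X.ip_commute[of "S (fst x)" "S (fst y)"] X.ip_commute[of "snd x" "snd y"]
      by simp
    show "ipY ip S x (y + z) = ipY ip S x y + ipY ip S x z"
      using y z S_lin(5) X.ip_add_right by (simp add: ipY_def Yset_iff)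
    show "ipY ip S x (r *\<^sub>R y) = complex_of_real r * ipY ip S x y"
      using y S_lin(6) X.ip_scaleR_right by (simp add: ipY_def Yset_iff distrib_left)
    show "ipY ip S x (pscale J \<i> y) = \<i> * ipY ip S x y"
      using y S_lin(7) X.ip_J_right by (simp add: ipY_def Yset_iff pscale_def distrib_left)
    show "0 \<le> Re (ipY ip S x x)"
      unfolding ipY_def using X.Re_ip_self_nonneg by simp
  qed (simp add: Yset_iff S_lin(1))
qed

lemma nY_eq_nrm: "semi_inner_space (Yset DS) (ipY ip S) J' \<Longrightarrow> semi_inner_space.nrm (ipY ip S) = nY ip S"
  by (rule ext) (simp add: semi_inner_space.nrm_def nY_def)

lemma nY_square:
  assumes "cinner_space J ip"
  shows "nY ip S x ^ 2 = cnorm ip (S (fst x)) ^ 2 + cnorm ip (snd x) ^ 2"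
proof -
  interpret X: semi_inner_space UNIV ip J by (rule cinner_space_semi_inner_space[OF assms])
  have "Re (ipY ip S x x) \<ge> 0" unfolding ipY_def using X.Re_ip_self_nonneg by simp
  thus ?thesis
    unfolding nY_def ipY_def using X.nrm_square cnorm_eq_nrm[OF X.semi_inner_space_axioms] by simp
qed

lemma sc_semigroup_energy_bounded:
  assumes op: "energy_bounded_operator (Yset DS) (ipY ip S) (pscale J \<i>) D G \<omega>"
    and sg: "sc_semigroup J ip S DS T" and gen: "neg_generator ip S DS T D G"
  shows "energy_bounded_semigroup (Yset DS) (ipY ip S) (pscale J \<i>) D G \<omega> T"
proof -
  interpret Y: energy_bounded_operator "Yset DS" "ipY ip S" "pscale J \<i>" D G \<omega> by (rule op)
  have nrm: "Y.nrm = nY ip S" by (rule nY_eq_nrm[OF Y.semi_inner_space_axioms])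
  have T: "t \<ge> 0 \<Longrightarrow> bounded_lin_Y J ip S DS (T t)" for t using sg unfolding sc_semigroup_def by blast
  show ?thesis
  proof (unfold_locales, unfold nrm Y.nlim_def)
    fix t r :: real and x y :: "'a \<times> 'a" assume "t \<ge> 0" "x \<in> Yset DS" "y \<in> Yset DS"
    with T[of t] show "T t x \<in> Yset DS" "T t (x + y) = T t x + T t y" "T t (r *\<^sub>R x) = r *\<^sub>R T t x"
      unfolding bounded_lin_Y_def by (metis pscale_of_real)+
  next
    fix t :: real assume "t \<ge> 0"
    with T[of t] show "\<exists>K. \<forall>x\<in>Yset DS. nY ip S (T t x) \<le> K * nY ip S x"
      unfolding bounded_lin_Y_def by blast
  next
    fix x assume "x \<in> Yset DS"
    thus "T 0 x = x" using sg unfolding sc_semigroup_def by blast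
  next
    fix s t :: real and x assume "s \<ge> 0" "t \<ge> 0" "x \<in> Yset DS"
    thus "T (s + t) x = T s (T t x)" using sg unfolding sc_semigroup_def by blast
  next
    fix t :: real and x assume "x \<in> Yset DS" "t \<ge> 0"
    thus "((\<lambda>s. nY ip S (T s x - T t x)) \<longlongrightarrow> 0) (at t within {0..})"
      using sg unfolding sc_semigroup_def by blast
  next
    fix x assume "x \<in> Yset DS"
    thus "(\<exists>y\<in>Yset DS. ((\<lambda>h. nY ip S ((1 / h) *\<^sub>R (T h x - x) - y)) \<longlongrightarrow> 0) (at_right 0)) \<longleftrightarrow> x \<in> D"
      using gen unfolding neg_generator_def by blast
  next
    fix x assume "x \<in> D"
    thus "((\<lambda>h. nY ip S ((1 / h) *\<^sub>R (T h x - x) - - G x)) \<longlongrightarrow> 0) (at_right 0)"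
      using gen Y.domain_subset unfolding neg_generator_def by blast
  qed
qed

lemma semigroup_pair_sc_group:
  assumes pair: "semigroup_pair (Yset DS) (ipY ip S) (pscale J \<i>) D G \<omega> T R"
    and sg: "sc_semigroup J ip S DS T" "sc_semigroup J ip S DS R"
  shows "sc_group J ip S DS (\<lambda>t. if 0 \<le> t then T t else R (- t))"
proof -
  interpret semigroup_pair "Yset DS" "ipY ip S" "pscale J \<i>" D G \<omega> T R by (rule pair)
  have nrm: "nrm = nY ip S" by (rule nY_eq_nrm[OF semi_inner_space_axioms])
  have U_eq: "(\<lambda>t. if 0 \<le> t then T t else R (- t)) = U" by (simp add: U_def fun_eq_iff)
  have "bounded_lin_Y J ip S DS (U t)" for t
    using sg unfolding U_def sc_semigroup_def by auto
  thus ?thesis unfolding sc_group_def nrm[symmetric] U_eq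
    by (intro conjI allI ballI) (simp_all add: U_0 U_add_time U_continuous)
qed

lemma Gplus_eq:
  assumes "complex_structure J"
  shows "Gplus J A B C \<xi> = (- snd \<xi>, A (fst \<xi>) + J (B (snd \<xi>)) + C (fst \<xi>))"
  unfolding Gplus_def pscale_def Hop_def Bhat_def Vop_def
  using complex_structure_linear[OF assms] by simp

lemma Gminus_eq:
  assumes "complex_structure J"
  shows "Gminus J A B C \<xi> = - Gplus J A B C \<xi>"
  unfolding Gminus_def Gplus_def pscale_def
  using complex_structure_linear[OF assms] by (simp add: prod_eq_iff)

lemma DH_iff: "x \<in> DH DA DS \<longleftrightarrow> fst x \<in> DA \<and> snd x \<in> DS"
  unfolding DH_def by (cases x) auto

locale wave_setting =
  fixes J :: "'a::real_vector \<Rightarrow> 'a" and ip :: "'a \<Rightarrow> 'a \<Rightarrow> complex"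
    and DA DS :: "'a set" and A S B C :: "'a \<Rightarrow> 'a" and \<epsilon> c d :: real
  assumes hilb: "hilbert_space J ip"
    and A_sa: "self_adjoint J ip DA A"
    and eps: "\<epsilon> > 0" and A_pos: "\<forall>x\<in>DA. Re (ip x (A x)) \<ge> \<epsilon> * Re (ip x x)"
    and sqrt: "is_pos_sqrt J ip DA A DS S"
    and B_lin: "lin_on J DS B"
    and B_sym_or_bdd: "symmetric_op ip DS B \<or> (\<exists>K. \<forall>x\<in>DS. cnorm ip (B x) \<le> K * cnorm ip x)"
    and C_lin: "lin_on J DS C"
    and C_bnd: "\<forall>x\<in>DS. (cnorm ip (C x))\<^sup>2 \<le> c\<^sup>2 * (cnorm ip (S x))\<^sup>2 + d\<^sup>2 * (cnorm ip x)\<^sup>2"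
begin

sublocale X: positive_self_adjoint ip J DA A \<epsilon>
proof -
  interpret complete_inner_space ip J by (rule hilbert_space_complete_inner_space[OF hilb])
  show "positive_self_adjoint ip J DA A \<epsilon>" by unfold_locales (use A_sa eps A_pos in auto)
qed

lemma cinner: "cinner_space J ip"
  using hilb unfolding hilbert_space_def by simp

lemma X_nrm: "X.nrm = cnorm ip"
  by (rule cnorm_eq_nrm[OF X.semi_inner_space_axioms])

lemma S_self_adjoint: "self_adjoint J ip DS S"
  and DA_eq: "DA = {x \<in> DS. S x \<in> DS}"
  and S_S: "x \<in> DA \<Longrightarrow> S (S x) = A x"
  using sqrt unfolding is_pos_sqrt_def by auto

lemma S_lin: "lin_on J DS S"
  and S_symmetric: "x \<in> DS \<Longrightarrow> y \<in> DS \<Longrightarrow> ip (S x) y = ip x (S y)"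
  and S_dense: "e > 0 \<Longrightarrow> \<exists>y\<in>DS. cnorm ip (x - y) < e"
  using S_self_adjoint unfolding self_adjoint_def symmetric_op_def dense_in_def by auto

lemma S_injective:
  assumes x: "x \<in> DS" and Sx: "S x = 0"
  shows "x = 0"
proof -
  have "ip (A w) x = ip w 0" if w: "w \<in> DA" for w
  proof -
    have "ip (A w) x = ip (S w) (S x)" using S_S[OF w] S_symmetric[OF _ x, of "S w"] w DA_eq by simp
    thus ?thesis using Sx X.ip_zero_right by simp
  qed
  hence xA: "x \<in> DA" and "A x = 0" using X.adjoint_eq[of x 0] by blast+
  hence "\<epsilon> * Re (ip x x) \<le> 0" using X.positive X.ip_zero_right by fastforce
  hence "X.nrm x ^ 2 \<le> 0" using eps X.nrm_square[of x] by (simp add: mult_le_0_iff)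
  thus ?thesis using X.nrm_eq_0_iff by simp
qed

lemma nrm_le_S: "x \<in> DA \<Longrightarrow> \<epsilon> * cnorm ip x ^ 2 \<le> cnorm ip (S x) ^ 2"
  using A_pos S_symmetric[of x "S x"] S_S DA_eq X.nrm_square X_nrm by auto

lemma DH_dense:
  assumes x: "x \<in> Yset DS" and e: "e > 0"
  shows "\<exists>y\<in>DH DA DS. nY ip S (x - y) < e"
proof -
  have x1: "fst x \<in> DS" using x by (simp add: Yset_iff)
  obtain v where v: "v \<in> DS" "cnorm ip (S (fst x) - v) < e / 2" using S_dense[of "e / 2"] e by auto
  obtain z where z: "z \<in> DS" "cnorm ip (snd x - z) < e / 2" using S_dense[of "e / 2"] e by auto
  obtain w where w: "w \<in> DA" "A w = v" using X.A_surj by blast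
  have Sw: "S w \<in> DA" "S (S w) = v" using S_S[OF w(1)] w DA_eq v(1) by auto
  have "S (fst x - S w) = S (fst x) - v" using lin_on_diff(2)[OF S_lin x1] Sw DA_eq by auto
  hence "nY ip S (x - (S w, z)) ^ 2 = cnorm ip (S (fst x) - v) ^ 2 + cnorm ip (snd x - z) ^ 2"
    using nY_square[OF cinner, of S "x - (S w, z)"] by simp
  also have "\<dots> \<le> (cnorm ip (S (fst x) - v) + cnorm ip (snd x - z))^2"
    using X.nrm_nonneg X_nrm by (simp add: power2_eq_square algebra_simps)
  finally have "nY ip S (x - (S w, z)) \<le> cnorm ip (S (fst x) - v) + cnorm ip (snd x - z)"
    using X.nrm_nonneg X_nrm by (metis UNIV_I add_nonneg_nonneg power2_le_imp_le)
  also have "\<dots> < e" using v(2) z(2) by simp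
  finally show ?thesis using Sw(1) z(1) by (force simp: DH_iff)
qed

sublocale Y: dense_domain_space "Yset DS" "ipY ip S" "pscale J \<i>" "DH DA DS"
proof -
  interpret Y: semi_inner_space "Yset DS" "ipY ip S" "pscale J \<i>"
    by (rule Y_semi_inner_space[OF cinner S_lin])
  have nrm: "Y.nrm = nY ip S" by (rule nY_eq_nrm[OF Y.semi_inner_space_axioms])
  note S_real_linear = lin_on_real_linear[OF S_lin] and A_real_linear = X.A_real_linear
  show "dense_domain_space (Yset DS) (ipY ip S) (pscale J \<i>) (DH DA DS)"
  proof (unfold_locales, unfold nrm)
    show "DH DA DS \<subseteq> Yset DS" using DA_eq by (auto simp: DH_iff Yset_iff)
  next
    fix x y r assume "x \<in> DH DA DS" "y \<in> DH DA DS"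
    thus "x + y \<in> DH DA DS" "r *\<^sub>R x \<in> DH DA DS"
      using A_real_linear(2,3) S_real_linear(2,3) by (auto simp: DH_iff)
  next
    fix x assume x: "x \<in> Yset DS" "nY ip S x = 0"
    hence "cnorm ip (S (fst x)) = 0" "cnorm ip (snd x) = 0"
      using nY_square[OF cinner, of S x] by (simp_all add: add_nonneg_eq_0_iff)
    hence "S (fst x) = 0" "snd x = 0" using X.nrm_eq_0_iff X_nrm by auto
    thus "x = 0" using S_injective x(1) by (simp add: Yset_iff prod_eq_iff)
  next
    fix x and e :: real assume "x \<in> Yset DS" "0 < e"
    thus "\<exists>y\<in>DH DA DS. nY ip S (x - y) < e" by (rule DH_dense)
  qed
qed


lemma complex_structure: "complex_structure J"
  using cinner unfolding cinner_space_def by blast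

lemma Im_ip_B_bound: "\<exists>K\<ge>0. \<forall>y\<in>DS. \<bar>Im (ip y (B y))\<bar> \<le> K * cnorm ip y ^ 2"
proof (cases "symmetric_op ip DS B")
  case True
  have "Im (ip y (B y)) = 0" if y: "y \<in> DS" for y
  proof -
    have "ip y (B y) = cnj (ip y (B y))"
      using True y X.ip_commute[of "B y" y] unfolding symmetric_op_def by simp
    thus ?thesis by (metis cnj.simps(2) complex.sel(2) neg_equal_zero)
  qed
  thus ?thesis by (intro exI[of _ 0]) simp
next
  case False
  then obtain K where K: "\<forall>x\<in>DS. cnorm ip (B x) \<le> K * cnorm ip x" using B_sym_or_bdd by blast
  have "\<bar>Im (ip y (B y))\<bar> \<le> (2 * \<bar>K\<bar>) * cnorm ip y ^ 2" if y: "y \<in> DS" for y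
  proof -
    have "\<bar>Im (ip y (B y))\<bar> \<le> 2 * cnorm ip y * cnorm ip (B y)"
      using abs_Im_le_cmod[of "ip y (B y)"] X.norm_ip_le[of y "B y"] X_nrm by simp
    also have "\<dots> \<le> 2 * cnorm ip y * (\<bar>K\<bar> * cnorm ip y)"
      using K y X.nrm_nonneg X_nrm
      by (intro mult_left_mono) (auto intro: order_trans[OF _ mult_right_mono[OF abs_ge_self]])
    finally show ?thesis by (simp add: power2_eq_square algebra_simps)
  qed
  thus ?thesis by (intro exI[of _ "2 * \<bar>K\<bar>"]) simp
qed

lemma nrm_C_le:
  assumes x: "x \<in> DA"
  shows "cnorm ip (C x) \<le> sqrt (c^2 + d^2 / \<epsilon>) * cnorm ip (S x)"
proof -
  have "d^2 * cnorm ip x ^ 2 \<le> d^2 * (cnorm ip (S x) ^ 2 / \<epsilon>)"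
    using nrm_le_S[OF x] eps by (intro mult_left_mono) (simp_all add: field_simps)
  moreover have "cnorm ip (C x) ^ 2 \<le> c^2 * cnorm ip (S x) ^ 2 + d^2 * cnorm ip x ^ 2"
    using C_bnd x DA_eq by blast
  ultimately have "cnorm ip (C x) ^ 2 \<le> c^2 * cnorm ip (S x) ^ 2 + d^2 * (cnorm ip (S x) ^ 2 / \<epsilon>)"
    by linarith
  also have "\<dots> = (sqrt (c^2 + d^2 / \<epsilon>) * cnorm ip (S x))^2"
    using eps by (simp add: power_mult_distrib field_simps)
  finally have "cnorm ip (C x) ^ 2 \<le> (sqrt (c^2 + d^2 / \<epsilon>) * cnorm ip (S x))^2" .
  thus ?thesis using X.nrm_nonneg X_nrm eps
    by (metis UNIV_I mult_nonneg_nonneg power2_le_imp_le real_sqrt_ge_zero add_nonneg_nonneg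
        zero_le_power2 divide_nonneg_pos)
qed

lemma Re_ipY_Gplus:
  assumes x: "x \<in> DA" and y: "y \<in> DS"
  shows "Re (ipY ip S (x, y) (Gplus J A B C (x, y))) = - Im (ip y (B y)) + Re (ip y (C x))"
proof -
  have "ip y (A x) = cnj (ip (S x) (S y))"
    using S_S[OF x] S_symmetric[OF y, of "S x"] DA_eq x X.ip_commute[of "S y" "S x"] by simp
  moreover have "S (- y) = - S y"
    using lin_on_real_linear(6)[OF S_lin y, of "-1"] by simp
  ultimately show ?thesis
    using X.ip_add_right X.ip_J_right X.ip_minus_right
    by (simp add: ipY_def Gplus_eq[OF complex_structure])
qed

lemma abs_Re_ip_C_le:
  assumes x: "x \<in> DA"
  shows "\<bar>Re (ip y (C x))\<bar> \<le> sqrt (c^2 + d^2 / \<epsilon>) * (cnorm ip y ^ 2 + cnorm ip (S x) ^ 2)"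
proof -
  define \<kappa> where "\<kappa> = sqrt (c^2 + d^2 / \<epsilon>)"
  have "\<bar>Re (ip y (C x))\<bar> \<le> cnorm ip y * cnorm ip (C x)"
    using X.abs_Re_ip_le[of y "C x"] X_nrm by simp
  also have "\<dots> \<le> \<kappa> * (cnorm ip y * cnorm ip (S x))"
    using nrm_C_le[OF x] X.nrm_nonneg X_nrm unfolding \<kappa>_def by (simp add: mult_left_mono mult.left_commute)
  also have "\<dots> \<le> \<kappa> * (cnorm ip y ^ 2 + cnorm ip (S x) ^ 2)"
  proof (rule mult_left_mono)
    have "0 \<le> cnorm ip y * cnorm ip (S x)" using X.nrm_nonneg X_nrm by simp
    thus "cnorm ip y * cnorm ip (S x) \<le> cnorm ip y ^ 2 + cnorm ip (S x) ^ 2"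
      using sum_squares_bound[of "cnorm ip y" "cnorm ip (S x)"] by linarith
  qed (use eps in \<open>simp add: \<kappa>_def\<close>)
  finally show ?thesis unfolding \<kappa>_def .
qed

lemma Gplus_energy_bound:
  obtains \<omega> where "\<And>\<xi>. \<xi> \<in> DH DA DS \<Longrightarrow> \<bar>Re (ipY ip S \<xi> (Gplus J A B C \<xi>))\<bar> \<le> \<omega> * nY ip S \<xi> ^ 2"
proof -
  obtain K where K: "K \<ge> 0" "\<And>y. y \<in> DS \<Longrightarrow> \<bar>Im (ip y (B y))\<bar> \<le> K * cnorm ip y ^ 2"
    using Im_ip_B_bound by blast
  define \<kappa> where "\<kappa> = sqrt (c^2 + d^2 / \<epsilon>)"
  have "\<bar>Re (ipY ip S (x, y) (Gplus J A B C (x, y)))\<bar> \<le> (K + \<kappa>) * nY ip S (x, y) ^ 2"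
    if x: "x \<in> DA" and y: "y \<in> DS" for x y
  proof -
    have "\<bar>Re (ipY ip S (x, y) (Gplus J A B C (x, y)))\<bar>
        \<le> K * cnorm ip y ^ 2 + \<kappa> * (cnorm ip y ^ 2 + cnorm ip (S x) ^ 2)"
      unfolding Re_ipY_Gplus[OF x y] \<kappa>_def using abs_Re_ip_C_le[OF x, of y] K(2)[OF y] by linarith
    also have "\<dots> \<le> (K + \<kappa>) * nY ip S (x, y) ^ 2"
      using nY_square[OF cinner, of S "(x, y)"] mult_nonneg_nonneg[OF K(1) zero_le_power2[of "cnorm ip (S x)"]]
      by (simp add: algebra_simps)
    finally show ?thesis .
  qed
  thus ?thesis using that[of "K + \<kappa>"] by (force simp: DH_iff)
qed


lemma Gplus_energy_bounded_operators:
  obtains \<omega> where "energy_bounded_operator (Yset DS) (ipY ip S) (pscale J \<i>) (DH DA DS) (Gplus J A B C) \<omega>"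
    and "energy_bounded_operator (Yset DS) (ipY ip S) (pscale J \<i>) (DH DA DS) (\<lambda>\<xi>. - Gplus J A B C \<xi>) \<omega>"
proof -
  obtain \<omega> where \<omega>: "\<And>\<xi>. \<xi> \<in> DH DA DS \<Longrightarrow> \<bar>Re (ipY ip S \<xi> (Gplus J A B C \<xi>))\<bar> \<le> \<omega> * nY ip S \<xi> ^ 2"
    using Gplus_energy_bound by blast
  have nrm: "Y.nrm = nY ip S" by (rule nY_eq_nrm[OF Y.semi_inner_space_axioms])
  note G = Gplus_eq[OF complex_structure] and J = complex_structure_linear[OF complex_structure]
  note A = X.A_real_linear and B = lin_on_real_linear[OF B_lin] and C = lin_on_real_linear[OF C_lin]
  have DA_DS: "x \<in> DA \<Longrightarrow> x \<in> DS" for x using DA_eq by blast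
  have G_in: "Gplus J A B C \<xi> \<in> Yset DS" if "\<xi> \<in> DH DA DS" for \<xi>
    using that lin_on_real_linear(3)[OF S_lin, of "snd \<xi>" "-1"] by (simp add: G DH_iff Yset_iff)
  have G_add: "Gplus J A B C (\<xi> + \<eta>) = Gplus J A B C \<xi> + Gplus J A B C \<eta>"
    if "\<xi> \<in> DH DA DS" "\<eta> \<in> DH DA DS" for \<xi> \<eta>
    using that A(5) B(5) C(5) DA_DS J by (simp add: G DH_iff algebra_simps)
  have G_scaleR: "Gplus J A B C (r *\<^sub>R \<xi>) = r *\<^sub>R Gplus J A B C \<xi>" if "\<xi> \<in> DH DA DS" for \<xi> r
    using that A(6) B(6) C(6) DA_DS J by (simp add: G DH_iff algebra_simps)
  have "energy_bounded_operator (Yset DS) (ipY ip S) (pscale J \<i>) (DH DA DS) (Gplus J A B C) \<omega>"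
    by unfold_locales (use G_in G_add G_scaleR \<omega> in \<open>simp_all add: nrm\<close>)
  moreover have "energy_bounded_operator (Yset DS) (ipY ip S) (pscale J \<i>) (DH DA DS) (\<lambda>\<xi>. - Gplus J A B C \<xi>) \<omega>"
  proof unfold_locales
    fix \<xi> assume \<xi>: "\<xi> \<in> DH DA DS"
    show "- Gplus J A B C \<xi> \<in> Yset DS" using Y.uminus_in G_in[OF \<xi>] .
    show "\<bar>Re (ipY ip S \<xi> (- Gplus J A B C \<xi>))\<bar> \<le> \<omega> * Y.nrm \<xi> ^ 2"
      using Y.ip_minus_right[OF Y.domain_in[OF \<xi>] G_in[OF \<xi>]] \<omega>[OF \<xi>] by (simp add: nrm)
  qed (use G_add G_scaleR in simp_all)
  ultimately show ?thesis using that by blast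
qed

end

theorem corollary9:
  fixes J :: "'a::real_vector \<Rightarrow> 'a" and ip :: "'a \<Rightarrow> 'a \<Rightarrow> complex"
    and DA DS :: "'a set" and A S B C :: "'a \<Rightarrow> 'a"
    and TP TM :: "real \<Rightarrow> 'a \<times> 'a \<Rightarrow> 'a \<times> 'a"
    and \<epsilon> a b c d :: real
  assumes hilb: "hilbert_space J ip" and nontriv: "\<exists>x::'a. x \<noteq> 0"
    and A_sa: "self_adjoint J ip DA A"
    and eps: "\<epsilon> > 0" and A_pos: "\<forall>x\<in>DA. Re (ip x (A x)) \<ge> \<epsilon> * Re (ip x x)"
    and sqrt: "is_pos_sqrt J ip DA A DS S"
    and B_lin: "lin_on J DS B" and a_bnd: "0 \<le> a" "a < 1"
    and B_bnd: "\<forall>x\<in>DS. (cnorm ip (B x))\<^sup>2 \<le> a\<^sup>2 * (cnorm ip (S x))\<^sup>2 + b\<^sup>2 * (cnorm ip x)\<^sup>2"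
    and B_sym_or_bdd: "symmetric_op ip DS B \<or> (\<exists>K. \<forall>x\<in>DS. cnorm ip (B x) \<le> K * cnorm ip x)"
    and C_lin: "lin_on J DS C"
    and C_bnd: "\<forall>x\<in>DS. (cnorm ip (C x))\<^sup>2 \<le> c\<^sup>2 * (cnorm ip (S x))\<^sup>2 + d\<^sup>2 * (cnorm ip x)\<^sup>2"
    and TP_sg: "sc_semigroup J ip S DS TP"
    and TP_gen: "neg_generator ip S DS TP (DH DA DS) (Gplus J A B C)"
    and TM_sg: "sc_semigroup J ip S DS TM"
    and TM_gen: "neg_generator ip S DS TM (DH DA DS) (Gminus J A B C)"
  shows "sc_group J ip S DS (\<lambda>t. if 0 \<le> t then TP t else TM (- t))
     \<and> (\<forall>t0. \<forall>\<xi>\<in>DH DA DS. \<exists>!u. u t0 = \<xi> \<and>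
          (\<forall>t. u t \<in> DH DA DS \<and> has_Y_derivative ip S u (- Gplus J A B C (u t)) t))
     \<and> (\<forall>u. (\<forall>t. u t \<in> DH DA DS \<and> has_Y_derivative ip S u (- Gplus J A B C (u t)) t) \<longrightarrow>
          (\<forall>t. ((\<lambda>s. ipY ip S (u s) (u s)) has_vector_derivative
                  complex_of_real (- 2 * Re (ipY ip S (u t) (Gplus J A B C (u t))))) (at t)))"
proof -
  \<comment> \<open>\<open>nontriv\<close>, \<open>a_bnd\<close> and \<open>B_bnd\<close> are only needed for the generation of \<open>T\<^sub>+\<close> and \<open>T\<^sub>-\<close>, which is assumed.\<close>
  interpret wave_setting J ip DA DS A S B C \<epsilon> c d
    using hilb A_sa eps A_pos sqrt B_lin B_sym_or_bdd C_lin C_bnd by unfold_locales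
  obtain \<omega> where G: "energy_bounded_operator (Yset DS) (ipY ip S) (pscale J \<i>) (DH DA DS) (Gplus J A B C) \<omega>"
    and minus_G: "energy_bounded_operator (Yset DS) (ipY ip S) (pscale J \<i>) (DH DA DS) (\<lambda>\<xi>. - Gplus J A B C \<xi>) \<omega>"
    by (rule Gplus_energy_bounded_operators)
  have "Gminus J A B C = (\<lambda>\<xi>. - Gplus J A B C \<xi>)" using Gminus_eq[OF complex_structure] by blast
  interpret semigroup_pair "Yset DS" "ipY ip S" "pscale J \<i>" "DH DA DS" "Gplus J A B C" \<omega> TP TM
    using sc_semigroup_energy_bounded[OF G TP_sg TP_gen]
      sc_semigroup_energy_bounded[OF minus_G TM_sg TM_gen[unfolded \<open>Gminus J A B C = _\<close>]]
    by (simp add: semigroup_pair_def semigroup_pair_axioms_def)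
  have "has_Y_derivative ip S u v t \<longleftrightarrow> Y.nlim (at 0) (\<lambda>h. (1/h) *\<^sub>R (u (t + h) - u t)) v" for u v t
    unfolding has_Y_derivative_def Y.nlim_def nY_eq_nrm[OF Y.semi_inner_space_axioms] ..
  thus ?thesis
    using semigroup_pair_sc_group[OF semigroup_pair_axioms TP_sg TM_sg] solution_exists_unique
      solution_energy_derivative by auto
qed

end
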